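(* For every $d,k,N\in\mathbb{N}$ there exists a non-commutative polynomial $q\in\mathbb{R}\langle s_1,\dots,s_N\rangle$ such that $\mathsf{bary}(\mathbf{x})=\mathrm{eval}_q(\mathbf{x})$ for all $\mathbf{x}\in\mathcal{G}_{d,k}^N$.
   Context: $T_{d,k}=\bigoplus_{\ell=0}^k(\mathbb{R}^d)^{\otimes\ell}$ is the truncated tensor algebra (elements $\mathbf{z}=\mathbf{z}^{(0)}\oplus\dots\oplus\mathbf{z}^{(k)}$) with product the bilinear extension of the tensor product of levels, set to $0$ when the total level exceeds $k$. $\mathfrak{g}_{d,k}$ is the smallest Lie subalgebra (commutator bracket) containing $e_1,\dots,e_d\in\mathbb{R}^d$; $\exp(\mathbf{z})=\sum_{\ell=0}^k\mathbf{z}^{\otimes\ell}/\ell!$; $\mathcal{G}_{d,k}=\exp(\mathfrak{g}_{d,k})$ (a group), $\log=\exp^{-1}$, $\log(\mathbf{s})=\sum_{\ell\ge1}\frac{(-1)^{\ell+1}}{\ell}(\mathbf{s}-1)^{\otimes\ell}$. For $\mathbf{x}\in\mathcal{G}_{d,k}^N$, $\mathsf{bary}(\mathbf{x})$ is the unique $\mathbf{m}\in\mathcal{G}_{d,k}$ with $\sum_{i=1}^N\log(\mathbf{m}^{-1}\mathbf{x}_i)=0$. $\mathbb{R}\langle s_1,\dots,s_N\rangle$ denotes the free associative $\mathbb{R}$-algebra on the $Nk$ non-commuting variables $s_i^{(j)}$, $i\in[N]$, $j\in[k]$. For $q$ in it, $\mathrm{eval}_q:T_{d,k}^N\to T_{d,k}$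 is the evaluation obtained by the unital algebra morphism sending $s_i^{(j)}$ to $\mathbf{z}_i^{(j)}$ (the level-$j$ component of the $i$-th argument, viewed in $T_{d,k}$), i.e. substituting $\mathbf{z}_i^{(j)}$ for $s_i^{(j)}$ and computing in $T_{d,k}$. *)

theory Defs
  imports Main "HOL.Real"
begin

text \<open>Truncated tensor algebra T_{d,k}: an element is a function from words
  (lists of letters in {0..<d}) to coefficients; the level-l component is the
  restriction to words of length l; words longer than k carry 0.\<close>

type_synonym tensor = "nat list \<Rightarrow> real"

definition T :: "nat \<Rightarrow> nat \<Rightarrow> tensor set" where
  "T d k = {x. \<forall>w. x w \<noteq> 0 \<longrightarrow> length w \<le> k \<and> set w \<subseteq> {..<d}}"

definition tone :: tensor where
  "tone = (\<lambda>w. if w = [] then 1 else 0)"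

definition tmult :: "nat \<Rightarrow> tensor \<Rightarrow> tensor \<Rightarrow> tensor" where
  "tmult k x y = (\<lambda>w. if length w \<le> k
      then (\<Sum>i\<in>{..length w}. x (take i w) * y (drop i w)) else 0)"

definition tpow :: "nat \<Rightarrow> tensor \<Rightarrow> nat \<Rightarrow> tensor" where
  "tpow k z n = (tmult k z ^^ n) tone"

definition tbracket :: "nat \<Rightarrow> tensor \<Rightarrow> tensor \<Rightarrow> tensor" where
  "tbracket k x y = (\<lambda>w. tmult k x y w - tmult k y x w)"

text \<open>Basis vector e_i of R^d viewed in T_{d,k} (level 1; it is 0 if k = 0).\<close>
definition tbasis :: "nat \<Rightarrow> nat \<Rightarrow> tensor" where
  "tbasis k i = (\<lambda>w. if w = [i] \<and> 1 \<le> k then 1 else 0)"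

inductive_set lie_alg :: "nat \<Rightarrow> nat \<Rightarrow> tensor set" for d k where
  gen: "i < d \<Longrightarrow> tbasis k i \<in> lie_alg d k"
| zero: "(\<lambda>w. 0) \<in> lie_alg d k"
| add: "x \<in> lie_alg d k \<Longrightarrow> y \<in> lie_alg d k \<Longrightarrow> (\<lambda>w. x w + y w) \<in> lie_alg d k"
| smult: "x \<in> lie_alg d k \<Longrightarrow> (\<lambda>w. c * x w) \<in> lie_alg d k"
| bracket: "x \<in> lie_alg d k \<Longrightarrow> y \<in> lie_alg d k \<Longrightarrow> tbracket k x y \<in> lie_alg d k"

definition texp :: "nat \<Rightarrow> tensor \<Rightarrow> tensor" where
  "texp k z = (\<lambda>w. \<Sum>l\<le>k. tpow k z l w / fact l)"

definition tlog :: "nat \<Rightarrow> tensor \<Rightarrow> tensor" where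
  "tlog k s = (\<lambda>w. \<Sum>l\<in>{1..k}. ((-1) ^ (l + 1) / real l) * tpow k (\<lambda>v. s v - tone v) l w)"

definition G :: "nat \<Rightarrow> nat \<Rightarrow> tensor set" where
  "G d k = texp k ` lie_alg d k"

definition tinv :: "nat \<Rightarrow> nat \<Rightarrow> tensor \<Rightarrow> tensor" where
  "tinv d k m = (THE y. y \<in> T d k \<and> tmult k m y = tone \<and> tmult k y m = tone)"

definition bary :: "nat \<Rightarrow> nat \<Rightarrow> nat \<Rightarrow> (nat \<Rightarrow> tensor) \<Rightarrow> tensor" where
  "bary d k N x = (THE m. m \<in> G d k \<and>
     (\<lambda>w. \<Sum>i<N. tlog k (tmult k (tinv d k m) (x i)) w) = (\<lambda>w. 0))"

text \<open>Non-commutative polynomials in R<s_i^(j) : i < N, 1 \<le> j \<le> k>: finitely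
  supported real coefficient functions on words over the variables (i,j).\<close>
definition ncpoly :: "nat \<Rightarrow> nat \<Rightarrow> ((nat \<times> nat) list \<Rightarrow> real) \<Rightarrow> bool" where
  "ncpoly N k q \<longleftrightarrow> finite {w. q w \<noteq> 0} \<and>
     (\<forall>w. q w \<noteq> 0 \<longrightarrow> set w \<subseteq> {..<N} \<times> {1..k})"

definition level :: "nat \<Rightarrow> tensor \<Rightarrow> tensor" where
  "level j z = (\<lambda>w. if length w = j then z w else 0)"

definition monoeval :: "nat \<Rightarrow> (nat \<times> nat) list \<Rightarrow> (nat \<Rightarrow> tensor) \<Rightarrow> tensor" where
  "monoeval k w z = foldr (\<lambda>(i, j) acc. tmult k (level j (z i)) acc) w tone"

definition ncEval :: "nat \<Rightarrow> ((nat \<times> nat) list \<Rightarrow> real) \<Rightarrow> (nat \<Rightarrow> tensor) \<Rightarrow> tensor" where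
  "ncEval k q z = (\<lambda>u. \<Sum>w\<in>{w. q w \<noteq> 0}. q w * monoeval k w z u)"

end

theory Submission
  imports Defs "HOL-Computational_Algebra.Formal_Power_Series"
begin

text \<open>
  \<open>G d k\<close> is exactly the set of group-like elements, i.e. those \<open>y\<close> with
  \<open>\<Delta>y = y \<otimes> y\<close> for the deconcatenation coproduct: \<open>exp\<close> maps primitive elements to
  group-like ones, every group-like element is the exponential of a primitive one (correct the
  exponent degree by degree), and primitive elements are Lie elements by the
  Dynkin--Specht--Wever identity.

  If \<open>h - 1\<close> starts in degree \<open>n \<ge> 1\<close>, then replacing \<open>m\<close> by \<open>m h\<close> changes the residual
  \<open>\<Sum>\<^sub>i log (m\<^sup>-\<^sup>1 x\<^sub>i)\<close> by \<open>-N (h - 1)\<close> up to terms of degree \<open>> n\<close>. Hence the barycenter is unique, and the iteration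
  \<open>m\<^sub>t\<^sub>+\<^sub>1 = m\<^sub>t exp (N\<^sup>-\<^sup>1 \<Sum>\<^sub>i log (m\<^sub>t\<^sup>-\<^sup>1 x\<^sub>i))\<close> started at \<open>1\<close> kills the residual
  in one more degree per step, so that \<open>m\<^sub>k\<close> is the barycenter. Every step only multiplies and
  evaluates truncated power series (exponential, logarithm, geometric series for the inverse),
  so \<open>m\<^sub>k\<close> is a non-commutative polynomial in the levels of the \<open>x\<^sub>i\<close>.
\<close>

section \<open>The truncated tensor algebra\<close>

definition truncated :: "nat \<Rightarrow> tensor \<Rightarrow> bool" where
  "truncated k x \<longleftrightarrow> (\<forall>w. k < length w \<longrightarrow> x w = 0)"

definition vanishes_below :: "nat \<Rightarrow> tensor \<Rightarrow> bool" where
  "vanishes_below n x \<longleftrightarrow> (\<forall>w. length w < n \<longrightarrow> x w = 0)"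

definition unipotent :: "nat \<Rightarrow> tensor \<Rightarrow> bool" where
  "unipotent k y \<longleftrightarrow> truncated k y \<and> y [] = 1"

lemma truncated_tmult [simp]: "truncated k (tmult k x y)"
  by (simp add: truncated_def tmult_def)

lemma truncated_tone [simp]: "truncated k tone"
  by (auto simp: truncated_def tone_def)

lemma truncated_zero [simp]: "truncated k (\<lambda>w. 0)"
  by (simp add: truncated_def)

lemma truncated_diff: "truncated k x \<Longrightarrow> truncated k y \<Longrightarrow> truncated k (\<lambda>w. x w - y w)"
  by (simp add: truncated_def)

lemma truncated_scale: "truncated k x \<Longrightarrow> truncated k (\<lambda>w. c * x w)"
  by (simp add: truncated_def)

lemma truncated_sum: "(\<And>a. a \<in> A \<Longrightarrow> truncated k (f a)) \<Longrightarrow> truncated k (\<lambda>w. \<Sum>a\<in>A. f a w)"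
  by (simp add: truncated_def)

lemma unipotent_tone [simp]: "unipotent k tone"
  by (simp add: unipotent_def) (simp add: tone_def)

lemma tmult_Nil: "tmult k x y [] = x [] * y []"
  by (simp add: tmult_def)

lemma unipotent_tmult: "unipotent k x \<Longrightarrow> unipotent k y \<Longrightarrow> unipotent k (tmult k x y)"
  by (simp add: unipotent_def tmult_Nil)

lemma tmult_add_left: "tmult k (\<lambda>w. x w + x' w) y = (\<lambda>w. tmult k x y w + tmult k x' y w)"
  by (auto simp: tmult_def algebra_simps sum.distrib)

lemma tmult_add_right: "tmult k x (\<lambda>w. y w + y' w) = (\<lambda>w. tmult k x y w + tmult k x y' w)"
  by (auto simp: tmult_def algebra_simps sum.distrib)

lemma tmult_diff_left: "tmult k (\<lambda>w. x w - x' w) y = (\<lambda>w. tmult k x y w - tmult k x' y w)"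
  by (auto simp: tmult_def algebra_simps sum_subtractf)

lemma tmult_diff_right: "tmult k x (\<lambda>w. y w - y' w) = (\<lambda>w. tmult k x y w - tmult k x y' w)"
  by (auto simp: tmult_def algebra_simps sum_subtractf)

lemma tmult_scale_left: "tmult k (\<lambda>w. c * x w) y = (\<lambda>w. c * tmult k x y w)"
  by (auto simp: tmult_def algebra_simps sum_distrib_left)

lemma tmult_scale_right: "tmult k x (\<lambda>w. c * y w) = (\<lambda>w. c * tmult k x y w)"
  by (auto simp: tmult_def algebra_simps sum_distrib_left)

lemma tmult_zero_left [simp]: "tmult k (\<lambda>w. 0) y = (\<lambda>w. 0)"
  by (auto simp: tmult_def)

lemma tmult_zero_right [simp]: "tmult k x (\<lambda>w. 0) = (\<lambda>w. 0)"
  by (auto simp: tmult_def)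

lemma tmult_sum_left:
  "finite A \<Longrightarrow> tmult k (\<lambda>w. \<Sum>a\<in>A. f a w) y = (\<lambda>w. \<Sum>a\<in>A. tmult k (f a) y w)"
  by (induction A rule: finite_induct) (auto simp: tmult_add_left)

lemma tmult_sum_right:
  "finite A \<Longrightarrow> tmult k y (\<lambda>w. \<Sum>a\<in>A. f a w) = (\<lambda>w. \<Sum>a\<in>A. tmult k y (f a) w)"
  by (induction A rule: finite_induct) (auto simp: tmult_add_right)

lemma tmult_tone_left: "truncated k x \<Longrightarrow> tmult k tone x = x"
proof
  fix w assume x: "truncated k x"
  have "(\<Sum>i\<le>length w. tone (take i w) * x (drop i w)) = (\<Sum>i\<le>length w. if i = 0 then x w else 0)"
    by (rule sum.cong) (auto simp: tone_def)
  then show "tmult k tone x w = x w"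
    using x by (simp add: tmult_def truncated_def)
qed

lemma tmult_tone_right: "truncated k x \<Longrightarrow> tmult k x tone = x"
proof
  fix w assume x: "truncated k x"
  have "(\<Sum>i\<le>length w. x (take i w) * tone (drop i w)) = (\<Sum>i\<le>length w. if i = length w then x w else 0)"
    by (rule sum.cong) (auto simp: tone_def)
  then show "tmult k x tone w = x w"
    using x by (simp add: tmult_def truncated_def)
qed

lemma tmult_assoc: "tmult k (tmult k x y) z = tmult k x (tmult k y z)"
proof
  fix w
  show "tmult k (tmult k x y) z w = tmult k x (tmult k y z) w"
  proof (cases "length w \<le> k")
    case False
    then show ?thesis by (simp add: tmult_def)
  next
    case True
    define n where "n = length w"
    define g where "g = (\<lambda>j l. x (take j w) * y (take l (drop j w)) * z (drop (j + l) w))"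
    have "tmult k (tmult k x y) z w = (\<Sum>i\<le>n. \<Sum>j\<le>i. g j (i - j))"
      using True unfolding tmult_def n_def g_def
      by (auto simp: sum_distrib_right min_def take_drop add.commute intro!: sum.cong)
    also have "\<dots> = (\<Sum>(j,l)\<in>{(j,l). j + l \<le> n}. g j l)"
      by (rule sum.triangle_reindex_eq[symmetric])
    also have "{(j,l). j + l \<le> n} = Sigma {..n} (\<lambda>j. {..n - j})"
      by auto
    also have "(\<Sum>(j,l)\<in>Sigma {..n} (\<lambda>j. {..n - j}). g j l) = (\<Sum>j\<le>n. \<Sum>l\<le>n - j. g j l)"
      by (simp add: sum.Sigma)
    also have "\<dots> = tmult k x (tmult k y z) w"
      using True unfolding tmult_def n_def g_def
      by (auto simp: sum_distrib_left mult.assoc add.commute intro!: sum.cong)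
    finally show ?thesis .
  qed
qed

lemma vanishes_below_0 [simp]: "vanishes_below 0 x"
  by (simp add: vanishes_below_def)

lemma vanishes_below_zero [simp]: "vanishes_below n (\<lambda>w. 0)"
  by (simp add: vanishes_below_def)

lemma vanishes_below_mono: "vanishes_below n x \<Longrightarrow> m \<le> n \<Longrightarrow> vanishes_below m x"
  by (simp add: vanishes_below_def)

lemma vanishes_below_add:
  "vanishes_below n x \<Longrightarrow> vanishes_below n y \<Longrightarrow> vanishes_below n (\<lambda>w. x w + y w)"
  by (simp add: vanishes_below_def)

lemma vanishes_below_diff:
  "vanishes_below n x \<Longrightarrow> vanishes_below n y \<Longrightarrow> vanishes_below n (\<lambda>w. x w - y w)"
  by (simp add: vanishes_below_def)

lemma vanishes_below_scale: "vanishes_below n x \<Longrightarrow> vanishes_below n (\<lambda>w. c * x w)"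
  by (simp add: vanishes_below_def)

lemma vanishes_below_sum:
  "(\<And>a. a \<in> A \<Longrightarrow> vanishes_below n (f a)) \<Longrightarrow> vanishes_below n (\<lambda>w. \<Sum>a\<in>A. f a w)"
  by (simp add: vanishes_below_def)

lemma unipotent_minus_tone: "unipotent k y \<Longrightarrow> vanishes_below 1 (\<lambda>w. y w - tone w)"
  by (simp add: vanishes_below_def unipotent_def tone_def)

lemma truncated_vanishes_below_eq_zero:
  "truncated k x \<Longrightarrow> vanishes_below (Suc k) x \<Longrightarrow> x = (\<lambda>w. 0)"
  by (auto simp: truncated_def vanishes_below_def) (metis not_less_eq)

lemma truncated_vanishes_below_eqI:
  assumes "truncated k x" "truncated k y" "vanishes_below (Suc k) (\<lambda>w. x w - y w)"
  shows "x = y"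
  using truncated_vanishes_below_eq_zero[OF truncated_diff[OF assms(1,2)] assms(3)]
  by (simp add: fun_eq_iff)

lemma vanishes_below_tmult:
  assumes "vanishes_below a x" "vanishes_below b y"
  shows "vanishes_below (a + b) (tmult k x y)"
  unfolding vanishes_below_def
proof (intro allI impI)
  fix w :: "nat list" assume w: "length w < a + b"
  have "x (take i w) * y (drop i w) = 0" if "i \<le> length w" for i
    using assms w that by (cases "i < a") (auto simp: vanishes_below_def)
  then show "tmult k x y w = 0"
    by (simp add: tmult_def sum.neutral)
qed

lemma vanishes_below_tmult_left: "vanishes_below n x \<Longrightarrow> vanishes_below n (tmult k x y)"
  using vanishes_below_tmult[of n x 0 y k] by simp

lemma vanishes_below_tmult_right: "vanishes_below n y \<Longrightarrow> vanishes_below n (tmult k x y)"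
  using vanishes_below_tmult[of 0 x n y k] by simp

lemma vanishes_below_tmult_diff:
  assumes "vanishes_below n (\<lambda>w. x w - x' w)" "vanishes_below n (\<lambda>w. y w - y' w)"
  shows "vanishes_below n (\<lambda>w. tmult k x y w - tmult k x' y' w)"
proof -
  have "(\<lambda>w. tmult k x y w - tmult k x' y' w) =
      (\<lambda>w. tmult k (\<lambda>w. x w - x' w) y w + tmult k x' (\<lambda>w. y w - y' w) w)"
    by (simp add: tmult_diff_left tmult_diff_right)
  then show ?thesis
    using assms by (simp add: vanishes_below_add vanishes_below_tmult_left vanishes_below_tmult_right)
qed

lemma tpow_0 [simp]: "tpow k z 0 = tone"
  by (simp add: tpow_def)

lemma tpow_Suc: "tpow k z (Suc n) = tmult k z (tpow k z n)"
  by (simp add: tpow_def)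

lemma truncated_tpow [simp]: "truncated k (tpow k z n)"
  by (cases n) (simp_all add: tpow_Suc)

lemma tpow_add: "tpow k z (m + n) = tmult k (tpow k z m) (tpow k z n)"
  by (induction m) (simp_all add: tpow_Suc tmult_tone_left tmult_assoc)

lemma vanishes_below_tpow: "vanishes_below 1 z \<Longrightarrow> vanishes_below n (tpow k z n)"
proof (induction n)
  case (Suc n)
  then show ?case
    using vanishes_below_tmult[of 1 z n "tpow k z n" k] by (simp add: tpow_Suc)
qed simp

lemma tpow_eq_zero: "vanishes_below 1 z \<Longrightarrow> k < n \<Longrightarrow> tpow k z n = (\<lambda>w. 0)"
  by (rule truncated_vanishes_below_eq_zero[of k])
    (auto intro: vanishes_below_mono[OF vanishes_below_tpow])

lemma vanishes_below_tpow_diff: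
  "vanishes_below n (\<lambda>w. x w - x' w) \<Longrightarrow> vanishes_below n (\<lambda>w. tpow k x l w - tpow k x' l w)"
  by (induction l) (simp_all add: tpow_Suc vanishes_below_tmult_diff)

lemma tpow_perturb:
  assumes a: "vanishes_below 1 a" and e: "vanishes_below n e" "truncated k e" and n: "1 \<le> n"
  shows "vanishes_below (Suc n)
           (\<lambda>w. tpow k (\<lambda>v. a v + e v) l w - tpow k a l w - (if l = 1 then e w else 0))"
proof (cases l)
  case (Suc l')
  define b where "b = (\<lambda>v. a v + e v)"
  have b: "vanishes_below 1 b"
    using a e n by (simp add: vanishes_below_def b_def)
  have diff: "(\<lambda>w. tpow k b (Suc l') w - tpow k a (Suc l') w)
      = (\<lambda>w. tmult k e (tpow k b l') w + tmult k a (\<lambda>w. tpow k b l' w - tpow k a l' w) w)"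
    by (simp add: tpow_Suc b_def tmult_add_left tmult_diff_right algebra_simps)
  show ?thesis
  proof (cases l')
    case 0
    have "tpow k b (Suc 0) w - tpow k a (Suc 0) w = e w" for w
      by (simp add: tpow_Suc b_def tmult_add_left tmult_tone_right[OF e(2)])
    then show ?thesis
      using Suc 0 by (simp add: vanishes_below_def b_def)
  next
    case (Suc l'')
    have "vanishes_below (n + 1) (tmult k e (tpow k b l'))"
      using Suc by (intro vanishes_below_tmult[OF e(1)] vanishes_below_mono[OF vanishes_below_tpow[OF b]]) simp
    moreover have "vanishes_below (1 + n) (tmult k a (\<lambda>w. tpow k b l' w - tpow k a l' w))"
      using e by (intro vanishes_below_tmult[OF a] vanishes_below_tpow_diff) (simp add: b_def)
    ultimately show ?thesis
      using diff \<open>l = Suc l'\<close> Suc by (simp add: b_def vanishes_below_add)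
  qed
qed simp

section \<open>Substitution into formal power series\<close>

unbundle fps_syntax

definition tfps_eval :: "nat \<Rightarrow> tensor \<Rightarrow> real fps \<Rightarrow> tensor" where
  "tfps_eval k a f = (\<lambda>w. \<Sum>n\<le>k. f $ n * tpow k a n w)"

lemma texp_eq_tfps_eval: "texp k a = tfps_eval k a (fps_exp 1)"
  by (simp add: texp_def tfps_eval_def divide_inverse mult.commute)

lemma tlog_eq_tfps_eval: "tlog k s = tfps_eval k (\<lambda>v. s v - tone v) (fps_ln 1)"
proof
  fix w
  define h where "h = (\<lambda>l. fps_ln 1 $ l * tpow k (\<lambda>v. s v - tone v) l w)"
  have "tfps_eval k (\<lambda>v. s v - tone v) (fps_ln 1) w = (\<Sum>l\<in>{1..k}. h l)"
    unfolding tfps_eval_def h_def[symmetric] by (rule sum.mono_neutral_right) (auto simp: h_def fps_ln_nth)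
  also have "\<dots> = tlog k s w"
    unfolding tlog_def
  proof (rule sum.cong)
    fix l :: nat assume "l \<in> {1..k}"
    then obtain l' where "l = Suc l'"
      by (cases l) auto
    then show "h l = (-1) ^ (l + 1) / real l * tpow k (\<lambda>v. s v - tone v) l w"
      by (simp add: h_def fps_ln_nth)
  qed simp
  finally show "tlog k s w = tfps_eval k (\<lambda>v. s v - tone v) (fps_ln 1) w" ..
qed

lemma tfps_eval_1: "tfps_eval k a 1 = tone"
  by (simp add: tfps_eval_def sum.atMost_shift)

lemma tfps_eval_X:
  assumes "vanishes_below 1 a" "truncated k a"
  shows "tfps_eval k a fps_X = a"
proof (cases k)
  case 0
  then show ?thesis
    using assms truncated_vanishes_below_eq_zero[of 0 a] by (simp add: tfps_eval_def)
next
  case (Suc k')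
  have "tfps_eval k a fps_X w = (\<Sum>n\<le>k. if n = 1 then tpow k a 1 w else 0)" for w
    unfolding tfps_eval_def by (intro sum.cong) auto
  also have "\<dots> w = tpow k a 1 w" for w
    using Suc by (subst sum.delta) auto
  finally show ?thesis
    using assms by (simp add: tpow_Suc tmult_tone_right fun_eq_iff)
qed

lemma tfps_eval_diff: "tfps_eval k a (f - g) = (\<lambda>w. tfps_eval k a f w - tfps_eval k a g w)"
  by (simp add: tfps_eval_def algebra_simps sum_subtractf)

lemma tfps_eval_scale: "tfps_eval k a (fps_const c * f) = (\<lambda>w. c * tfps_eval k a f w)"
  by (simp add: tfps_eval_def algebra_simps sum_distrib_left)

lemma tfps_eval_sum: "tfps_eval k a (\<Sum>i\<in>A. f i) = (\<lambda>w. \<Sum>i\<in>A. tfps_eval k a (f i) w)"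
  unfolding tfps_eval_def fps_sum_nth sum_distrib_right by (rule ext, rule sum.swap)

lemma tfps_eval_cong: "(\<And>n. n \<le> k \<Longrightarrow> f $ n = g $ n) \<Longrightarrow> tfps_eval k a f = tfps_eval k a g"
  by (simp add: tfps_eval_def)

lemma tfps_eval_mult:
  assumes a: "vanishes_below 1 a"
  shows "tmult k (tfps_eval k a f) (tfps_eval k a g) = tfps_eval k a (f * g)"
proof
  fix w
  define h where "h = (\<lambda>i j. f $ i * g $ j * tpow k a (i + j) w)"
  have "tmult k (tfps_eval k a f) (tfps_eval k a g) w = (\<Sum>(i,j)\<in>{..k} \<times> {..k}. h i j)"
    by (simp add: tfps_eval_def tmult_scale_left tmult_scale_right tmult_sum_left tmult_sum_right
        tpow_add[symmetric] h_def mult.assoc sum_distrib_left sum.cartesian_product)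
  also have "\<dots> = (\<Sum>(i,j)\<in>{(i,j). i + j \<le> k}. h i j)"
  proof (rule sum.mono_neutral_right)
    have "h i j = 0" if "k < i + j" for i j
      using tpow_eq_zero[OF a that] by (simp add: h_def)
    then show "\<forall>x\<in>{..k} \<times> {..k} - {(i,j). i + j \<le> k}. (case x of (i, j) \<Rightarrow> h i j) = 0"
      by (auto simp: not_le) (metis leI)
  qed auto
  also have "\<dots> = (\<Sum>n\<le>k. \<Sum>i\<le>n. h i (n - i))"
    by (rule sum.triangle_reindex_eq)
  also have "\<dots> = tfps_eval k a (f * g) w"
    by (simp add: tfps_eval_def fps_mult_nth h_def sum_distrib_right atLeast0AtMost)
  finally show "tmult k (tfps_eval k a f) (tfps_eval k a g) w = tfps_eval k a (f * g) w" .
qed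

lemma tfps_eval_power: "vanishes_below 1 a \<Longrightarrow> tpow k (tfps_eval k a f) l = tfps_eval k a (f ^ l)"
  by (induction l) (simp_all add: tpow_Suc tfps_eval_mult tfps_eval_1)

lemma tfps_eval_compose:
  assumes a: "vanishes_below 1 a" and g: "g $ 0 = 0"
  shows "tfps_eval k (tfps_eval k a g) f = tfps_eval k a (f oo g)"
proof -
  have "tfps_eval k (tfps_eval k a g) f = tfps_eval k a (\<Sum>l\<le>k. fps_const (f $ l) * g ^ l)"
    by (simp add: tfps_eval_def [of k "tfps_eval k a g"] tfps_eval_power[OF a] tfps_eval_sum
        tfps_eval_scale)
  also have "\<dots> = tfps_eval k a (f oo g)"
  proof (rule tfps_eval_cong)
    fix n assume n: "n \<le> k"
    have "(\<Sum>l\<le>k. fps_const (f $ l) * g ^ l) $ n = (\<Sum>l\<le>k. f $ l * (g ^ l $ n))"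
      by (simp add: fps_sum_nth)
    also have "\<dots> = (\<Sum>l\<in>{0..n}. f $ l * (g ^ l $ n))"
    proof (rule sum.mono_neutral_right)
      show "\<forall>l\<in>{..k} - {0..n}. f $ l * (g ^ l $ n) = 0"
        using startsby_zero_power_prefix[OF g] by auto
    qed (use n in auto)
    finally show "(\<Sum>l\<le>k. fps_const (f $ l) * g ^ l) $ n = (f oo g) $ n"
      by (simp add: fps_compose_nth)
  qed
  finally show ?thesis .
qed

lemma tlog_texp:
  assumes "vanishes_below 1 a" "truncated k a"
  shows "tlog k (texp k a) = a"
proof -
  have "(\<lambda>v. texp k a v - tone v) = tfps_eval k a (fps_exp 1 - 1)"
    by (simp add: texp_eq_tfps_eval tfps_eval_diff tfps_eval_1)
  then have "tlog k (texp k a) = tfps_eval k a (fps_ln 1 oo (fps_exp 1 - 1))"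
    by (simp add: tlog_eq_tfps_eval tfps_eval_compose[OF assms(1)])
  also have "fps_ln 1 oo (fps_exp 1 - 1) = (fps_X :: real fps)"
    by (simp add: fps_ln_fps_exp_inv fps_inv_fps_exp_compose)
  finally show ?thesis
    using assms by (simp add: tfps_eval_X)
qed

lemma tpow_uminus: "tpow k (\<lambda>w. - a w) n = (\<lambda>w. (-1) ^ n * tpow k a n w)"
proof (induction n)
  case (Suc n)
  have "tpow k (\<lambda>w. - a w) (Suc n) = tmult k (\<lambda>w. (-1) * a w) (\<lambda>w. (-1) ^ n * tpow k a n w)"
    by (simp add: tpow_Suc Suc)
  also have "\<dots> = (\<lambda>w. (-1) * ((-1) ^ n * tmult k a (tpow k a n) w))"
    by (simp only: tmult_scale_left tmult_scale_right)
  finally show ?case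
    by (simp add: tpow_Suc)
qed simp

lemma texp_uminus_inverse:
  assumes a: "vanishes_below 1 a"
  shows "tmult k (texp k a) (texp k (\<lambda>w. - a w)) = tone"
    and "tmult k (texp k (\<lambda>w. - a w)) (texp k a) = tone"
proof -
  have neg: "texp k (\<lambda>w. - a w) = tfps_eval k a (fps_exp (-1))"
    by (auto simp: texp_def tfps_eval_def tpow_uminus divide_inverse mult.commute
        intro!: sum.cong)
  have "fps_exp (1::real) * fps_exp (-1) = 1" "fps_exp (-1::real) * fps_exp 1 = 1"
    by (simp_all flip: fps_exp_add_mult)
  then show "tmult k (texp k a) (texp k (\<lambda>w. - a w)) = tone"
    and "tmult k (texp k (\<lambda>w. - a w)) (texp k a) = tone"
    unfolding neg by (simp_all add: texp_eq_tfps_eval tfps_eval_mult[OF a] tfps_eval_1)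
qed

lemma vanishes_below_tfps_eval_diff:
  "vanishes_below n (\<lambda>w. a w - a' w) \<Longrightarrow>
    vanishes_below n (\<lambda>w. tfps_eval k a f w - tfps_eval k a' f w)"
  unfolding tfps_eval_def
  by (simp add: sum_subtractf[symmetric] right_diff_distrib[symmetric] vanishes_below_sum
      vanishes_below_scale vanishes_below_tpow_diff)

lemma tfps_eval_perturb:
  assumes a: "vanishes_below 1 a" and e: "vanishes_below n e" "truncated k e" and n: "1 \<le> n"
  shows "vanishes_below (Suc n)
           (\<lambda>w. tfps_eval k (\<lambda>v. a v + e v) f w - tfps_eval k a f w - f $ 1 * e w)"
proof (cases "k = 0")
  case True
  then have "e = (\<lambda>w. 0)"
    using e n by (intro truncated_vanishes_below_eq_zero) (auto intro: vanishes_below_mono)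
  then show ?thesis
    by simp
next
  case False
  define D where "D = (\<lambda>l w. tpow k (\<lambda>v. a v + e v) l w - tpow k a l w - (if l = 1 then e w else 0))"
  have "(\<Sum>l\<le>k. f $ l * (if l = 1 then e w else 0)) = (\<Sum>l\<le>k. if l = 1 then f $ 1 * e w else 0)"
    for w by (rule sum.cong) auto
  then have "tfps_eval k (\<lambda>v. a v + e v) f w - tfps_eval k a f w - f $ 1 * e w
      = (\<Sum>l\<le>k. f $ l * D l w)" for w
    using False by (simp add: tfps_eval_def D_def right_diff_distrib sum_subtractf)
  then show ?thesis
    using tpow_perturb[OF a e n]
    by (simp add: D_def vanishes_below_sum vanishes_below_scale)
qed

lemma tfps_eval_zero: "tfps_eval k (\<lambda>w. 0) f = (\<lambda>w. f $ 0 * tone w)"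
proof -
  have "tpow k (\<lambda>w. 0) (Suc n) = (\<lambda>w. 0)" for n
    by (simp add: tpow_Suc)
  then show ?thesis
    by (simp add: tfps_eval_def sum.atMost_shift)
qed

lemma tfps_eval_first_order:
  assumes "vanishes_below n e" "truncated k e" "1 \<le> n"
  shows "vanishes_below (Suc n) (\<lambda>w. tfps_eval k e f w - f $ 0 * tone w - f $ 1 * e w)"
  using tfps_eval_perturb[of "\<lambda>w. 0", OF _ assms] by (simp add: tfps_eval_zero)

lemma truncated_tfps_eval [simp]: "truncated k (tfps_eval k a f)"
  unfolding tfps_eval_def by (intro truncated_sum truncated_scale truncated_tpow)

lemma tpow_Nil: "vanishes_below 1 a \<Longrightarrow> tpow k a l [] = (if l = 0 then 1 else 0)"
  using vanishes_below_tpow[of a l k] by (cases l) (auto simp: vanishes_below_def tone_def)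

lemma tfps_eval_Nil: "vanishes_below 1 a \<Longrightarrow> tfps_eval k a f [] = f $ 0"
  by (simp add: tfps_eval_def tpow_Nil if_distrib cong: if_cong)

lemma texp_Nil: "vanishes_below 1 a \<Longrightarrow> texp k a [] = 1"
  by (simp add: texp_eq_tfps_eval tfps_eval_Nil)

lemma tlog_Nil: "unipotent k y \<Longrightarrow> tlog k y [] = 0"
  by (simp add: tlog_eq_tfps_eval tfps_eval_Nil[OF unipotent_minus_tone] fps_ln_nth)

section \<open>Inverses\<close>

lemma tmult_inverse_unique:
  assumes "truncated k y" "truncated k s" "tmult k z s = tone" "tmult k y z = tone"
  shows "y = s"
proof -
  have "y = tmult k y (tmult k z s)"
    using assms by (simp add: tmult_tone_right)
  also have "\<dots> = tmult k (tmult k y z) s"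
    by (rule tmult_assoc[symmetric])
  also have "\<dots> = s"
    using assms by (simp add: tmult_tone_left)
  finally show ?thesis .
qed

definition tinv_series :: "nat \<Rightarrow> tensor \<Rightarrow> tensor" where
  "tinv_series k z = tfps_eval k (\<lambda>w. tone w - z w) (Abs_fps (\<lambda>_. 1))"

lemma tinv_series_inverse:
  assumes z: "unipotent k z"
  shows "tmult k z (tinv_series k z) = tone" and "tmult k (tinv_series k z) z = tone"
proof -
  define b where "b = (\<lambda>w. tone w - z w)"
  have b: "vanishes_below 1 b" "truncated k b"
    using z by (auto simp: b_def unipotent_def vanishes_below_def tone_def truncated_def)
  have zb: "z = tfps_eval k b (1 - fps_X)"
    by (simp add: tfps_eval_diff tfps_eval_1 tfps_eval_X[OF b]) (simp add: b_def)
  have inv: "tinv_series k z = tfps_eval k b (Abs_fps (\<lambda>_. 1))"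
    by (simp add: tinv_series_def b_def)
  have geom: "(1 - fps_X) * Abs_fps (\<lambda>_. 1) = (1 :: real fps)"
    using inverse_mult_eq_1[of "Abs_fps (\<lambda>_. 1 :: real)"] by (simp add: fps_inverse_gp')
  have "tmult k z (tinv_series k z) = tfps_eval k b ((1 - fps_X) * Abs_fps (\<lambda>_. 1))"
    unfolding inv by (subst zb) (rule tfps_eval_mult[OF b(1)])
  then show "tmult k z (tinv_series k z) = tone"
    by (simp add: geom tfps_eval_1)
  have "tmult k (tinv_series k z) z = tfps_eval k b (Abs_fps (\<lambda>_. 1) * (1 - fps_X))"
    unfolding inv by (subst zb) (rule tfps_eval_mult[OF b(1)])
  then show "tmult k (tinv_series k z) z = tone"
    using geom by (simp add: mult.commute[of "Abs_fps (\<lambda>_. 1)"] tfps_eval_1)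
qed

lemma unipotent_tinv_series:
  assumes "unipotent k z"
  shows "unipotent k (tinv_series k z)"
  using tinv_series_inverse(1)[OF assms] assms
  by (auto simp: unipotent_def tinv_series_def tone_def dest!: fun_cong[of _ _ "[]"] simp: tmult_Nil)

lemma tinv_series_tmult:
  assumes "unipotent k a" "unipotent k b"
  shows "tinv_series k (tmult k a b) = tmult k (tinv_series k b) (tinv_series k a)"
proof (rule tmult_inverse_unique[symmetric])
  have "tmult k (tmult k (tinv_series k b) (tinv_series k a)) (tmult k a b)
      = tmult k (tinv_series k b) (tmult k (tmult k (tinv_series k a) a) b)"
    by (simp add: tmult_assoc)
  then show "tmult k (tmult k (tinv_series k b) (tinv_series k a)) (tmult k a b) = tone"
    using assms by (simp add: tinv_series_inverse tmult_tone_left unipotent_def)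
  show "tmult k (tmult k a b) (tinv_series k (tmult k a b)) = tone"
    using assms by (intro tinv_series_inverse unipotent_tmult)
qed (simp_all add: tinv_series_def)

lemma tinv_series_texp:
  assumes "vanishes_below 1 a" "truncated k a"
  shows "tinv_series k (texp k a) = texp k (\<lambda>w. - a w)"
proof (rule tmult_inverse_unique)
  show "tmult k (texp k a) (texp k (\<lambda>w. - a w)) = tone"
    by (rule texp_uminus_inverse(1)[OF assms(1)])
  have "unipotent k (texp k a)"
    using assms by (simp add: unipotent_def texp_Nil) (simp add: texp_eq_tfps_eval)
  then show "tmult k (tinv_series k (texp k a)) (texp k a) = tone"
    by (rule tinv_series_inverse)
qed (simp_all add: tinv_series_def texp_eq_tfps_eval)

lemma tinv_series_near_tone:
  assumes h: "unipotent k h" and n: "vanishes_below n (\<lambda>w. h w - tone w)" "1 \<le> n"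
  shows "vanishes_below (Suc n) (\<lambda>w. tinv_series k h w - (tone w - (h w - tone w)))"
proof -
  have "vanishes_below n (\<lambda>w. tone w - h w)" "truncated k (\<lambda>w. tone w - h w)"
    using n h by (auto simp: vanishes_below_def truncated_def unipotent_def tone_def)
  from tfps_eval_first_order[OF this n(2), of "Abs_fps (\<lambda>_. 1)"]
  show ?thesis
    by (simp add: tinv_series_def algebra_simps)
qed

lemma T_truncated: "x \<in> T d k \<Longrightarrow> truncated k x"
  by (auto simp: T_def truncated_def)

lemma T_zero [simp]: "(\<lambda>w. 0) \<in> T d k"
  by (simp add: T_def)

lemma T_tone [simp]: "tone \<in> T d k"
  by (simp add: T_def tone_def)

lemma T_iff: "x \<in> T d k \<longleftrightarrow> (\<forall>w. (length w \<le> k \<and> set w \<subseteq> {..<d}) \<or> x w = 0)"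
  by (auto simp: T_def)

lemma T_add: "x \<in> T d k \<Longrightarrow> y \<in> T d k \<Longrightarrow> (\<lambda>w. x w + y w) \<in> T d k"
  by (simp add: T_iff) (metis add_0)

lemma T_diff: "x \<in> T d k \<Longrightarrow> y \<in> T d k \<Longrightarrow> (\<lambda>w. x w - y w) \<in> T d k"
  by (simp add: T_iff) (metis diff_self)

lemma T_scale: "x \<in> T d k \<Longrightarrow> (\<lambda>w. c * x w) \<in> T d k"
  by (simp add: T_def)

lemma T_sum: "(\<And>a. a \<in> A \<Longrightarrow> f a \<in> T d k) \<Longrightarrow> (\<lambda>w. \<Sum>a\<in>A. f a w) \<in> T d k"
  by (induction A rule: infinite_finite_induct) (simp_all add: T_add)

lemma T_tmult:
  assumes "x \<in> T d k" "y \<in> T d k"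
  shows "tmult k x y \<in> T d k"
  unfolding T_def
proof (intro CollectI allI impI)
  fix w assume nz: "tmult k x y w \<noteq> 0"
  then have len: "length w \<le> k" and "(\<Sum>i\<le>length w. x (take i w) * y (drop i w)) \<noteq> 0"
    by (auto simp: tmult_def split: if_splits)
  then obtain i where "x (take i w) * y (drop i w) \<noteq> 0"
    by (meson sum.not_neutral_contains_not_neutral)
  then have "set (take i w) \<subseteq> {..<d}" "set (drop i w) \<subseteq> {..<d}"
    using assms by (auto simp: T_def)
  then have "set w \<subseteq> {..<d}"
    by (metis Un_subset_iff append_take_drop_id set_append)
  with len show "length w \<le> k \<and> set w \<subseteq> {..<d}" ..
qed

lemma T_tpow: "z \<in> T d k \<Longrightarrow> tpow k z n \<in> T d k"
  by (induction n) (simp_all add: tpow_Suc T_tmult)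

lemma T_tfps_eval: "a \<in> T d k \<Longrightarrow> tfps_eval k a f \<in> T d k"
  unfolding tfps_eval_def by (intro T_sum T_scale T_tpow)

lemma T_texp: "a \<in> T d k \<Longrightarrow> texp k a \<in> T d k"
  by (simp add: texp_eq_tfps_eval T_tfps_eval)

lemma T_tinv_series: "z \<in> T d k \<Longrightarrow> tinv_series k z \<in> T d k"
  by (simp add: tinv_series_def T_tfps_eval T_diff)

lemma T_tbasis: "i < d \<Longrightarrow> tbasis k i \<in> T d k"
  by (auto simp: T_def tbasis_def)

lemma T_lie_alg: "x \<in> lie_alg d k \<Longrightarrow> x \<in> T d k"
  by (induction rule: lie_alg.induct) (auto simp: T_tbasis T_add T_scale tbracket_def T_diff T_tmult)

lemma tinv_eq_tinv_series:
  assumes "z \<in> T d k" "z [] = 1"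
  shows "tinv d k z = tinv_series k z"
  unfolding tinv_def
proof (rule the_equality)
  have z: "unipotent k z"
    using assms by (simp add: unipotent_def T_truncated)
  then show "tinv_series k z \<in> T d k \<and> tmult k z (tinv_series k z) = tone \<and> tmult k (tinv_series k z) z = tone"
    using assms by (simp add: T_tinv_series tinv_series_inverse)
  show "y = tinv_series k z" if "y \<in> T d k \<and> tmult k z y = tone \<and> tmult k y z = tone" for y
    using that tmult_inverse_unique[of k y "tinv_series k z" z] tinv_series_inverse[OF z]
    by (auto simp: T_truncated tinv_series_def)
qed

section \<open>Shuffles\<close>

fun shuffles :: "nat list \<Rightarrow> nat list \<Rightarrow> nat list list" where
  "shuffles [] v = [v]"
| "shuffles (a # u) [] = [a # u]"
| "shuffles (a # u) (b # v) = map (Cons a) (shuffles u (b # v)) @ map (Cons b) (shuffles (a # u) v)"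

definition shuffle_coeff :: "tensor \<Rightarrow> nat list \<Rightarrow> nat list \<Rightarrow> real" where
  "shuffle_coeff f u v = (\<Sum>w\<leftarrow>shuffles u v. f w)"

definition lquot :: "nat \<Rightarrow> tensor \<Rightarrow> tensor" where
  "lquot a x = (\<lambda>w. x (a # w))"

lemma lquot_apply: "lquot a x w = x (a # w)"
  by (simp add: lquot_def)

lemma shuffle_coeff_Nil_left [simp]: "shuffle_coeff f [] v = f v"
  by (simp add: shuffle_coeff_def)

lemma shuffle_coeff_Nil_right [simp]: "shuffle_coeff f u [] = f u"
  by (cases u) (simp_all add: shuffle_coeff_def)

lemma shuffle_coeff_Cons_Cons:
  "shuffle_coeff f (a # u) (b # v) = shuffle_coeff (lquot a f) u (b # v) + shuffle_coeff (lquot b f) (a # u) v"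
  by (simp add: shuffle_coeff_def o_def lquot_def)

lemma shuffle_coeff_unfold:
  "shuffle_coeff f u v = (if u = [] \<and> v = [] then f [] else 0)
     + (if u \<noteq> [] then shuffle_coeff (lquot (hd u) f) (tl u) v else 0)
     + (if v \<noteq> [] then shuffle_coeff (lquot (hd v) f) u (tl v) else 0)"
  by (cases u; cases v) (simp_all add: shuffle_coeff_Cons_Cons lquot_apply)

lemma length_shuffles: "w \<in> set (shuffles u v) \<Longrightarrow> length w = length u + length v"
  by (induction u v arbitrary: w rule: shuffles.induct) auto

lemma shuffle_coeff_add: "shuffle_coeff (\<lambda>w. f w + g w) u v = shuffle_coeff f u v + shuffle_coeff g u v"
  by (simp add: shuffle_coeff_def sum_list_addf)

lemma shuffle_coeff_diff: "shuffle_coeff (\<lambda>w. f w - g w) u v = shuffle_coeff f u v - shuffle_coeff g u v"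
  by (simp add: shuffle_coeff_def sum_list_subtractf)

lemma shuffle_coeff_scale: "shuffle_coeff (\<lambda>w. c * f w) u v = c * shuffle_coeff f u v"
  by (simp add: shuffle_coeff_def sum_list_const_mult)

lemma shuffle_coeff_divide: "shuffle_coeff (\<lambda>w. f w / c) u v = shuffle_coeff f u v / c"
  using shuffle_coeff_scale[of "1 / c" f u v] by (simp add: divide_inverse mult.commute)

lemma shuffle_coeff_sum: "shuffle_coeff (\<lambda>w. \<Sum>a\<in>A. f a w) u v = (\<Sum>a\<in>A. shuffle_coeff (f a) u v)"
  by (induction A rule: infinite_finite_induct) (simp_all add: shuffle_coeff_add shuffle_coeff_def)

lemma shuffle_coeff_zero [simp]: "shuffle_coeff (\<lambda>w. 0) u v = 0"
  by (simp add: shuffle_coeff_def)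

lemma shuffle_coeff_cong:
  "(\<And>w. length w = length u + length v \<Longrightarrow> f w = g w) \<Longrightarrow> shuffle_coeff f u v = shuffle_coeff g u v"
  unfolding shuffle_coeff_def
  by (rule arg_cong[where f = sum_list], rule map_cong) (auto dest: length_shuffles)

lemma shuffle_coeff_tone: "shuffle_coeff tone u v = tone u * tone v"
proof (cases "u = [] \<and> v = []")
  case False
  then have "shuffle_coeff tone u v = shuffle_coeff (\<lambda>w. 0) u v"
    by (intro shuffle_coeff_cong) (auto simp: tone_def)
  then show ?thesis
    using False by (auto simp: tone_def)
qed (simp add: tone_def)

lemma shuffle_coeff_snoc_snoc:
  "shuffle_coeff f (u @ [a]) (v @ [b])
    = shuffle_coeff (\<lambda>w. f (w @ [a])) u (v @ [b]) + shuffle_coeff (\<lambda>w. f (w @ [b])) (u @ [a]) v"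
proof (induction "length u + length v" arbitrary: u v f rule: less_induct)
  case less
  show ?case
  proof (cases u)
    case Nil
    then show ?thesis
      using less[of "[]" "tl v" "lquot (hd v) f"]
      by (cases v) (simp_all add: shuffle_coeff_Cons_Cons lquot_def)
  next
    case (Cons x u')
    then show ?thesis
      using less[of u' v "lquot x f"] less[of u "tl v" "lquot (hd v) f"]
      by (cases v) (simp_all add: shuffle_coeff_Cons_Cons lquot_def)
  qed
qed

lemma tmult_Cons:
  "length w < k \<Longrightarrow> tmult k x y (a # w) = x [] * y (a # w) + tmult k (lquot a x) y w"
  by (simp add: tmult_def sum.atMost_Suc_shift lquot_apply del: sum.atMost_Suc)

lemma shuffle_coeff_lquot_tmult:
  assumes "length u + length v < k"
  shows "shuffle_coeff (lquot a (tmult k x y)) u v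
    = x [] * shuffle_coeff (lquot a y) u v + shuffle_coeff (tmult k (lquot a x) y) u v"
proof -
  have "shuffle_coeff (lquot a (tmult k x y)) u v
      = shuffle_coeff (\<lambda>w. x [] * lquot a y w + tmult k (lquot a x) y w) u v"
    by (rule shuffle_coeff_cong) (use assms in \<open>simp add: tmult_Cons lquot_apply\<close>)
  then show ?thesis
    by (simp add: shuffle_coeff_add shuffle_coeff_scale lquot_def)
qed

text \<open>The deconcatenation coproduct is multiplicative.\<close>

lemma shuffle_coeff_tmult:
  assumes "length u + length v \<le> k"
  shows "shuffle_coeff (tmult k x y) u v = (\<Sum>i\<le>length u. \<Sum>j\<le>length v.
           shuffle_coeff x (take i u) (take j v) * shuffle_coeff y (drop i u) (drop j v))"
  using assms
proof (induction "length u + length v" arbitrary: u v x rule: less_induct)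
  case less
  show ?case
  proof (cases "u = [] \<or> v = []")
    case True
    then show ?thesis
      using less.prems by (auto simp: tmult_def)
  next
    case False
    then obtain a u' b v' where u: "u = a # u'" and v: "v = b # v'"
      by (meson neq_Nil_conv)
    define Y where "Y i j = shuffle_coeff y (drop i u) (drop j v)" for i j
    have split: "shuffle_coeff x (take i u) (take j v) * Y i j =
        (if i = 0 \<and> j = 0 then x [] * Y 0 0 else 0)
      + (if i = 0 then 0 else shuffle_coeff (lquot a x) (take (i - 1) u') (take j v) * Y i j)
      + (if j = 0 then 0 else shuffle_coeff (lquot b x) (take i u) (take (j - 1) v') * Y i j)" for i j
      using shuffle_coeff_unfold[of x "take i u" "take j v"] u v
      by (cases i; cases j) (simp_all add: algebra_simps)
    have "(\<Sum>i\<le>length u. \<Sum>j\<le>length v. shuffle_coeff x (take i u) (take j v) * Y i j)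
        = x [] * Y 0 0 + shuffle_coeff (tmult k (lquot a x) y) u' v
          + shuffle_coeff (tmult k (lquot b x) y) u v'"
      unfolding split sum.distrib
      using less.hyps[of u' v "lquot a x"] less.hyps[of u v' "lquot b x"] less.prems u v
      by (simp add: Y_def sum.atMost_Suc_shift del: sum.atMost_Suc)
    moreover have "shuffle_coeff (tmult k x y) u v = x [] * Y 0 0
        + shuffle_coeff (tmult k (lquot a x) y) u' v + shuffle_coeff (tmult k (lquot b x) y) u v'"
      using less.prems u v
      by (simp add: shuffle_coeff_Cons_Cons shuffle_coeff_lquot_tmult Y_def algebra_simps)
    ultimately show ?thesis
      by (simp add: Y_def)
  qed
qed

section \<open>Group-like and primitive elements\<close>

text \<open>Since \<open>shuffle_coeff y u v\<close> is the coefficient of \<open>u \<otimes> v\<close> in the deconcatenation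
  coproduct \<open>\<Delta>y\<close>, these say \<open>\<Delta>y = y \<otimes> y\<close> and \<open>\<Delta>a = a \<otimes> 1 + 1 \<otimes> a\<close> up to degree \<open>k\<close>.\<close>

definition group_like :: "nat \<Rightarrow> nat \<Rightarrow> tensor \<Rightarrow> bool" where
  "group_like d k y \<longleftrightarrow> y \<in> T d k \<and> y [] = 1 \<and>
     (\<forall>u v. length u + length v \<le> k \<longrightarrow> shuffle_coeff y u v = y u * y v)"

definition primitive :: "nat \<Rightarrow> nat \<Rightarrow> tensor \<Rightarrow> bool" where
  "primitive d k a \<longleftrightarrow> a \<in> T d k \<and> a [] = 0 \<and>
     (\<forall>u v. u \<noteq> [] \<longrightarrow> v \<noteq> [] \<longrightarrow> length u + length v \<le> k \<longrightarrow> shuffle_coeff a u v = 0)"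

lemma group_like_unipotent: "group_like d k y \<Longrightarrow> unipotent k y"
  by (auto simp: group_like_def unipotent_def intro: T_truncated)

lemma primitive_vanishes_below_1: "primitive d k a \<Longrightarrow> vanishes_below 1 a"
  by (simp add: primitive_def vanishes_below_def)

lemma primitive_truncated: "primitive d k a \<Longrightarrow> truncated k a"
  by (auto simp: primitive_def intro: T_truncated)

lemma group_like_tmult:
  assumes y: "group_like d k y" and z: "group_like d k z"
  shows "group_like d k (tmult k y z)"
proof -
  have "shuffle_coeff (tmult k y z) u v = tmult k y z u * tmult k y z v"
    if l: "length u + length v \<le> k" for u v
  proof -
    have "shuffle_coeff (tmult k y z) u v
        = (\<Sum>i\<le>length u. \<Sum>j\<le>length v. (y (take i u) * z (drop i u)) * (y (take j v) * z (drop j v)))"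
      unfolding shuffle_coeff_tmult[OF l]
      using y z l by (intro sum.cong refl) (simp add: group_like_def)
    also have "\<dots> = tmult k y z u * tmult k y z v"
      using l by (simp add: tmult_def sum_product)
    finally show ?thesis .
  qed
  then show ?thesis
    using y z by (simp add: group_like_def T_tmult tmult_Nil)
qed

lemma shuffle_coeff_primitive:
  assumes "primitive d k a" "length u + length v \<le> k"
  shows "shuffle_coeff a u v = (if u = [] then a v else 0) + (if v = [] then a u else 0)"
  using assms by (auto simp: primitive_def)

lemma shuffle_coeff_primitive_tmult:
  assumes a: "primitive d k a" and l: "length u + length v \<le> k"
  shows "shuffle_coeff (tmult k a b) u v
    = (\<Sum>j\<le>length v. a (take j v) * shuffle_coeff b u (drop j v))
    + (\<Sum>i\<le>length u. a (take i u) * shuffle_coeff b (drop i u) v)"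
proof -
  have "shuffle_coeff (tmult k a b) u v = (\<Sum>i\<le>length u. \<Sum>j\<le>length v.
      (if i = 0 then a (take j v) * shuffle_coeff b u (drop j v) else 0)
    + (if j = 0 then a (take i u) * shuffle_coeff b (drop i u) v else 0))"
    unfolding shuffle_coeff_tmult[OF l]
    using l shuffle_coeff_primitive[OF a] by (intro sum.cong refl) (auto simp: algebra_simps)
  moreover have "(\<Sum>i\<le>length u. \<Sum>j\<le>length v. if i = 0 then a (take j v) * shuffle_coeff b u (drop j v) else 0)
      = (\<Sum>i\<le>length u. if i = 0 then \<Sum>j\<le>length v. a (take j v) * shuffle_coeff b u (drop j v) else 0)"
    by (intro sum.cong) auto
  ultimately show ?thesis
    by (simp add: sum.distrib)
qed

lemma primitive_tbracket:
  assumes "primitive d k a" "primitive d k b"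
  shows "primitive d k (tbracket k a b)"
proof -
  have key: "shuffle_coeff (tmult k x y) u v = x v * y u + x u * y v"
    if xy: "primitive d k x" "primitive d k y" and uv: "u \<noteq> []" "v \<noteq> []" "length u + length v \<le> k"
    for x y u v
  proof -
    have "(\<Sum>j\<le>length v. x (take j v) * shuffle_coeff y u (drop j v))
        = (\<Sum>j\<le>length v. if j = length v then x v * y u else 0)"
      using xy uv by (intro sum.cong) (auto simp: shuffle_coeff_primitive[OF xy(2)] primitive_def)
    moreover have "(\<Sum>i\<le>length u. x (take i u) * shuffle_coeff y (drop i u) v)
        = (\<Sum>i\<le>length u. if i = length u then x u * y v else 0)"
      using xy uv by (intro sum.cong) (auto simp: shuffle_coeff_primitive[OF xy(2)] primitive_def)
    ultimately show ?thesis
      using shuffle_coeff_primitive_tmult[OF xy(1) uv(3)] by simp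
  qed
  show ?thesis
    using assms key[OF assms] key[OF assms(2,1)]
    by (simp add: primitive_def tbracket_def shuffle_coeff_diff T_diff T_tmult tmult_Nil)
qed

lemma primitive_zero: "primitive d k (\<lambda>w. 0)"
  by (simp add: primitive_def)

lemma primitive_add: "primitive d k a \<Longrightarrow> primitive d k b \<Longrightarrow> primitive d k (\<lambda>w. a w + b w)"
  by (simp add: primitive_def T_add shuffle_coeff_add)

lemma primitive_scale: "primitive d k a \<Longrightarrow> primitive d k (\<lambda>w. c * a w)"
  by (simp add: primitive_def T_scale shuffle_coeff_scale)

lemma primitive_sum: "(\<And>i. i \<in> A \<Longrightarrow> primitive d k (f i)) \<Longrightarrow> primitive d k (\<lambda>w. \<Sum>i\<in>A. f i w)"
  by (induction A rule: infinite_finite_induct) (simp_all add: primitive_zero primitive_add)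

lemma primitive_tbasis: "i < d \<Longrightarrow> primitive d k (tbasis k i)"
proof -
  assume i: "i < d"
  have "shuffle_coeff (tbasis k i) u v = shuffle_coeff (\<lambda>w. 0) u v" if "u \<noteq> []" "v \<noteq> []" for u v
    using that by (intro shuffle_coeff_cong) (auto simp: tbasis_def neq_Nil_conv)
  moreover have "tbasis k i [] = 0"
    by (simp add: tbasis_def)
  ultimately show ?thesis
    using T_tbasis[OF i] by (simp add: primitive_def)
qed

lemma primitive_lie_alg: "x \<in> lie_alg d k \<Longrightarrow> primitive d k x"
  by (induction rule: lie_alg.induct)
    (simp_all add: primitive_tbasis primitive_zero primitive_add primitive_scale primitive_tbracket)

lemma pascal_sum:
  fixes A B :: "nat \<Rightarrow> real"
  shows "(\<Sum>m\<le>n. real (n choose m) * A m * B (Suc n - m))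
       + (\<Sum>m\<le>n. real (n choose m) * A (Suc m) * B (n - m))
       = (\<Sum>m\<le>Suc n. real (Suc n choose m) * A m * B (Suc n - m))"
proof -
  have "(\<Sum>m\<le>n. real (n choose m) * A m * B (Suc n - m))
      = A 0 * B (Suc n) + (\<Sum>m\<le>n. real (n choose Suc m) * A (Suc m) * B (n - m))"
    using sum.atMost_Suc_shift[of "\<lambda>m. real (n choose m) * A m * B (Suc n - m)" n]
    by (simp add: binomial_eq_0)
  then show ?thesis
    by (simp add: sum.atMost_Suc_shift algebra_simps sum.distrib del: sum.atMost_Suc)
qed

lemma shuffle_coeff_tpow:
  assumes a: "primitive d k a" and l: "length u + length v \<le> k"
  shows "shuffle_coeff (tpow k a n) u v = (\<Sum>m\<le>n. real (n choose m) * tpow k a m u * tpow k a (n - m) v)"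
  using l
proof (induction n arbitrary: u v)
  case 0
  then show ?case
    by (simp add: shuffle_coeff_tone)
next
  case (Suc n)
  define P where "P = tpow k a"
  have lu: "length u \<le> k" and lv: "length v \<le> k"
    using Suc.prems by auto
  have "(\<Sum>j\<le>length v. a (take j v) * shuffle_coeff (P n) u (drop j v))
      = (\<Sum>j\<le>length v. a (take j v) * (\<Sum>m\<le>n. real (n choose m) * P m u * P (n - m) (drop j v)))"
    using Suc by (intro sum.cong refl) (simp add: P_def)
  also have "\<dots> = (\<Sum>m\<le>n. real (n choose m) * P m u * (\<Sum>j\<le>length v. a (take j v) * P (n - m) (drop j v)))"
    by (simp add: sum_distrib_left sum_distrib_right algebra_simps sum.swap[of _ "{..length v}"])
  also have "\<dots> = (\<Sum>m\<le>n. real (n choose m) * P m u * P (Suc n - m) v)"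
    using lv by (intro sum.cong refl) (simp add: P_def tpow_Suc tmult_def Suc_diff_le)
  finally have right: "(\<Sum>j\<le>length v. a (take j v) * shuffle_coeff (P n) u (drop j v))
      = (\<Sum>m\<le>n. real (n choose m) * P m u * P (Suc n - m) v)" .
  have "(\<Sum>i\<le>length u. a (take i u) * shuffle_coeff (P n) (drop i u) v)
      = (\<Sum>i\<le>length u. a (take i u) * (\<Sum>m\<le>n. real (n choose m) * P m (drop i u) * P (n - m) v))"
    using Suc by (intro sum.cong refl) (simp add: P_def)
  also have "\<dots> = (\<Sum>m\<le>n. real (n choose m) * (\<Sum>i\<le>length u. a (take i u) * P m (drop i u)) * P (n - m) v)"
    by (simp add: sum_distrib_left sum_distrib_right algebra_simps sum.swap[of _ "{..length u}"])
  also have "\<dots> = (\<Sum>m\<le>n. real (n choose m) * P (Suc m) u * P (n - m) v)"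
    using lu by (intro sum.cong refl) (simp add: P_def tpow_Suc tmult_def)
  finally have left: "(\<Sum>i\<le>length u. a (take i u) * shuffle_coeff (P n) (drop i u) v)
      = (\<Sum>m\<le>n. real (n choose m) * P (Suc m) u * P (n - m) v)" .
  show ?case
    using shuffle_coeff_primitive_tmult[OF a Suc.prems, of "P n"] right left
      pascal_sum[of n "\<lambda>m. P m u" "\<lambda>m. P m v"]
    by (simp add: P_def tpow_Suc)
qed

lemma sum_triangle_eq_sum_square:
  fixes g :: "nat \<Rightarrow> nat \<Rightarrow> real"
  assumes g: "\<And>i j. g i j \<noteq> 0 \<Longrightarrow> i \<le> p \<and> j \<le> q" and pq: "p + q \<le> k"
  shows "(\<Sum>l\<le>k. \<Sum>m\<le>l. g m (l - m)) = (\<Sum>i\<le>k. \<Sum>j\<le>k. g i j)"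
proof -
  have "(\<Sum>l\<le>k. \<Sum>m\<le>l. g m (l - m)) = (\<Sum>(i,j)\<in>{(i,j). i + j \<le> k}. g i j)"
    by (rule sum.triangle_reindex_eq[symmetric])
  also have "\<dots> = (\<Sum>(i,j)\<in>{..p} \<times> {..q}. g i j)"
  proof (rule sum.mono_neutral_right)
    show "finite {(i,j). i + j \<le> k}"
      by (rule finite_subset[of _ "{..k} \<times> {..k}"]) auto
    show "{..p} \<times> {..q} \<subseteq> {(i,j). i + j \<le> k}"
      using pq by auto
    show "\<forall>x\<in>{(i,j). i + j \<le> k} - {..p} \<times> {..q}. (case x of (i, j) \<Rightarrow> g i j) = 0"
      using g by fastforce
  qed
  also have "\<dots> = (\<Sum>(i,j)\<in>{..k} \<times> {..k}. g i j)"
  proof (rule sum.mono_neutral_left)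
    show "{..p} \<times> {..q} \<subseteq> {..k} \<times> {..k}"
      using pq by auto
    show "\<forall>x\<in>{..k} \<times> {..k} - {..p} \<times> {..q}. (case x of (i, j) \<Rightarrow> g i j) = 0"
      using g by fastforce
  qed simp
  finally show ?thesis
    by (simp add: sum.cartesian_product)
qed

lemma group_like_texp:
  assumes a: "primitive d k a"
  shows "group_like d k (texp k a)"
proof -
  have a1: "vanishes_below 1 a"
    by (rule primitive_vanishes_below_1[OF a])
  have "shuffle_coeff (texp k a) u v = texp k a u * texp k a v" if l: "length u + length v \<le> k" for u v
  proof -
    define g where "g i j = tpow k a i u / fact i * (tpow k a j v / fact j)" for i j
    have "shuffle_coeff (texp k a) u v = (\<Sum>l\<le>k. shuffle_coeff (tpow k a l) u v / fact l)"
      unfolding texp_def by (simp add: shuffle_coeff_sum shuffle_coeff_divide)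
    also have "\<dots> = (\<Sum>l\<le>k. \<Sum>m\<le>l. g m (l - m))"
      by (intro sum.cong refl)
        (simp add: shuffle_coeff_tpow[OF a l] sum_divide_distrib g_def binomial_fact)
    also have "\<dots> = (\<Sum>i\<le>k. \<Sum>j\<le>k. g i j)"
      using vanishes_below_tpow[OF a1] l
      by (intro sum_triangle_eq_sum_square[of g "length u" "length v"])
        (auto simp: g_def vanishes_below_def not_le[symmetric])
    also have "\<dots> = texp k a u * texp k a v"
      by (simp add: texp_def g_def sum_product)
    finally show ?thesis .
  qed
  then show ?thesis
    using a by (simp add: group_like_def primitive_def T_texp texp_Nil[OF a1])
qed

lemma G_group_like: "x \<in> G d k \<Longrightarrow> group_like d k x"
  by (auto simp: G_def intro: group_like_texp primitive_lie_alg)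

section \<open>Group-like elements are exponentials of primitive ones\<close>

lemma T_level: "z \<in> T d k \<Longrightarrow> level j z \<in> T d k"
  by (auto simp: T_def level_def)

lemma shuffle_coeff_level:
  "shuffle_coeff (level j z) u v = (if length u + length v = j then shuffle_coeff z u v else 0)"
proof (cases "length u + length v = j")
  case True
  then show ?thesis
    by (simp, intro shuffle_coeff_cong) (simp add: level_def)
next
  case False
  then have "shuffle_coeff (level j z) u v = shuffle_coeff (\<lambda>w. 0) u v"
    by (intro shuffle_coeff_cong) (simp add: level_def)
  then show ?thesis
    using False by simp
qed

lemma primitive_level_diff:
  assumes y: "group_like d k y" and z: "group_like d k z" and yz: "vanishes_below n (\<lambda>w. y w - z w)"
  shows "primitive d k (level n (\<lambda>w. y w - z w))"
proof -
  have "shuffle_coeff (\<lambda>w. y w - z w) u v = 0"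
    if "u \<noteq> []" "v \<noteq> []" "length u + length v = n" "n \<le> k" for u v
  proof -
    have "length u < n" "length v < n"
      using that by (auto simp: neq_Nil_conv)
    then have "y u = z u" "y v = z v"
      using yz by (auto simp: vanishes_below_def)
    then show ?thesis
      using that y z by (simp add: shuffle_coeff_diff group_like_def)
  qed
  moreover have "level n (\<lambda>w. y w - z w) [] = 0"
    using y z by (simp add: level_def group_like_def)
  ultimately show ?thesis
    using y z by (auto simp: primitive_def group_like_def shuffle_coeff_level T_level T_diff)
qed

lemma group_like_texp_approx:
  assumes y: "group_like d k y" and n: "n \<le> k"
  shows "\<exists>a. primitive d k a \<and> vanishes_below (Suc n) (\<lambda>w. texp k a w - y w)"
  using n
proof (induction n)
  case 0
  have "vanishes_below 1 (\<lambda>w. texp k (\<lambda>w. 0) w - y w)"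
    using y by (simp add: vanishes_below_def texp_Nil group_like_def)
  then show ?case
    using primitive_zero by auto
next
  case (Suc m)
  then obtain a where a: "primitive d k a" "vanishes_below (Suc m) (\<lambda>w. texp k a w - y w)"
    by auto
  define e where "e = level (Suc m) (\<lambda>w. y w - texp k a w)"
  have e: "primitive d k e"
    unfolding e_def using a
    by (intro primitive_level_diff[OF y group_like_texp])
      (auto simp: vanishes_below_def)
  have "vanishes_below (Suc m) e"
    by (simp add: e_def vanishes_below_def level_def)
  from tfps_eval_perturb[OF primitive_vanishes_below_1[OF a(1)] this primitive_truncated[OF e],
      of "fps_exp 1"]
  have "vanishes_below (Suc (Suc m)) (\<lambda>w. texp k (\<lambda>v. a v + e v) w - texp k a w - e w)"
    by (simp add: texp_eq_tfps_eval)
  moreover have "vanishes_below (Suc (Suc m)) (\<lambda>w. texp k a w + e w - y w)"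
    using a(2) by (auto simp: vanishes_below_def e_def level_def)
  ultimately have "vanishes_below (Suc (Suc m)) (\<lambda>w. texp k (\<lambda>v. a v + e v) w - y w)"
    using vanishes_below_add by fastforce
  then show ?case
    using primitive_add[OF a(1) e] by blast
qed

lemma group_like_eq_texp:
  assumes y: "group_like d k y"
  obtains a where "primitive d k a" "texp k a = y"
proof -
  obtain a where a: "primitive d k a" "vanishes_below (Suc k) (\<lambda>w. texp k a w - y w)"
    using group_like_texp_approx[OF y order_refl] by blast
  have "texp k a = y"
    using a y by (intro truncated_vanishes_below_eqI)
      (simp_all add: texp_eq_tfps_eval group_like_unipotent[THEN unipotent_def[THEN iffD1]])
  with a that show ?thesis
    by blast
qed

lemma primitive_tlog:
  assumes "group_like d k y"
  shows "primitive d k (tlog k y)"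
proof -
  obtain a where a: "primitive d k a" "texp k a = y"
    using group_like_eq_texp[OF assms] .
  then show ?thesis
    using tlog_texp[OF primitive_vanishes_below_1[OF a(1)] primitive_truncated[OF a(1)]] by simp
qed

lemma group_like_tinv_series:
  assumes "group_like d k y"
  shows "group_like d k (tinv_series k y)"
proof -
  obtain a where a: "primitive d k a" "texp k a = y"
    using group_like_eq_texp[OF assms] .
  then have "tinv_series k y = texp k (\<lambda>w. - a w)"
    using tinv_series_texp[OF primitive_vanishes_below_1[OF a(1)] primitive_truncated[OF a(1)]] by simp
  moreover have "primitive d k (\<lambda>w. - a w)"
    using primitive_scale[OF a(1), of "-1"] by simp
  ultimately show ?thesis
    by (simp add: group_like_texp)
qed

section \<open>Primitive elements are Lie elements\<close>

text \<open>The Dynkin--Specht--Wever argument: \<open>bracketing d k n p\<close> replaces every word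
  \<open>a\<^sub>1 \<dots> a\<^sub>n\<close> of \<open>p\<close> by the right-normed bracket \<open>[a\<^sub>1, [a\<^sub>2, \<dots>, a\<^sub>n]]\<close> of basis vectors,
  and on a primitive \<open>p\<close> that is homogeneous of degree \<open>n\<close> it is multiplication by \<open>n\<close>.\<close>

fun bracketing :: "nat \<Rightarrow> nat \<Rightarrow> nat \<Rightarrow> tensor \<Rightarrow> tensor" where
  "bracketing d k 0 p = (\<lambda>w. 0)"
| "bracketing d k (Suc 0) p = (\<lambda>w. \<Sum>a<d. p [a] * tbasis k a w)"
| "bracketing d k (Suc (Suc n)) p =
     (\<lambda>w. \<Sum>a<d. tbracket k (tbasis k a) (bracketing d k (Suc n) (lquot a p)) w)"

definition homogeneous :: "nat \<Rightarrow> tensor \<Rightarrow> bool" where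
  "homogeneous n x \<longleftrightarrow> (\<forall>w. length w \<noteq> n \<longrightarrow> x w = 0)"

lemma lie_alg_sum:
  "(\<And>a. a \<in> A \<Longrightarrow> f a \<in> lie_alg d k) \<Longrightarrow> (\<lambda>w. \<Sum>a\<in>A. f a w) \<in> lie_alg d k"
  by (induction A rule: infinite_finite_induct) (simp_all add: lie_alg.zero lie_alg.add)

lemma bracketing_lie_alg: "bracketing d k n p \<in> lie_alg d k"
proof (induction d k n p rule: bracketing.induct)
  case (3 d k n p)
  show ?case
    unfolding bracketing.simps by (rule lie_alg_sum) (auto intro: lie_alg.bracket lie_alg.gen 3)
qed (auto intro!: lie_alg_sum lie_alg.zero lie_alg.smult lie_alg.gen)

lemma homogeneous_tmult: "homogeneous a x \<Longrightarrow> homogeneous b y \<Longrightarrow> homogeneous (a + b) (tmult k x y)"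
  unfolding homogeneous_def
proof (intro allI impI)
  fix w :: "nat list"
  assume x: "\<forall>w. length w \<noteq> a \<longrightarrow> x w = 0" and y: "\<forall>w. length w \<noteq> b \<longrightarrow> y w = 0"
    and w: "length w \<noteq> a + b"
  have "x (take i w) * y (drop i w) = 0" if "i \<le> length w" for i
    using x y w that by (cases "i = a") auto
  then show "tmult k x y w = 0"
    by (simp add: tmult_def sum.neutral)
qed

lemma homogeneous_tbasis: "homogeneous 1 (tbasis k a)"
  by (simp add: homogeneous_def tbasis_def)

lemma homogeneous_level: "homogeneous n (level n p)"
  by (simp add: homogeneous_def level_def)

lemma homogeneous_bracketing: "homogeneous n (bracketing d k n p)"
proof (induction d k n p rule: bracketing.induct)
  case (2 d k p)
  then show ?case
    by (auto simp: homogeneous_def tbasis_def intro!: sum.neutral)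
next
  case (3 d k n p)
  have "homogeneous (1 + Suc n) (tmult k (tbasis k a) (bracketing d k (Suc n) (lquot a p)))"
    and "homogeneous (Suc n + 1) (tmult k (bracketing d k (Suc n) (lquot a p)) (tbasis k a))"
    if "a \<in> {..<d}" for a
    using homogeneous_tmult[OF homogeneous_tbasis 3[OF that]]
      homogeneous_tmult[OF 3[OF that] homogeneous_tbasis] by simp_all
  then show ?case
    by (auto simp: homogeneous_def tbracket_def)
qed (simp add: homogeneous_def)

lemma tmult_tbasis_left:
  assumes "v \<noteq> []" "length v \<le> k"
  shows "tmult k (tbasis k a) D v = (if hd v = a then D (tl v) else 0)"
proof -
  have "tmult k (tbasis k a) D v = (\<Sum>i\<le>length v. tbasis k a (take i v) * D (drop i v))"
    using assms by (simp add: tmult_def)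
  also have "\<dots> = (\<Sum>i\<le>length v. if i = 1 then (if hd v = a then D (tl v) else 0) else 0)"
  proof (intro sum.cong refl)
    fix i assume "i \<in> {..length v}"
    then show "tbasis k a (take i v) * D (drop i v) = (if i = 1 then (if hd v = a then D (tl v) else 0) else 0)"
      using assms by (cases v; cases i) (auto simp: tbasis_def drop_Suc)
  qed
  also have "\<dots> = (if hd v = a then D (tl v) else 0)"
    using assms by (subst sum.delta) (auto simp: Suc_le_eq)
  finally show ?thesis .
qed

lemma tmult_tbasis_right:
  assumes "v \<noteq> []" "length v \<le> k"
  shows "tmult k D (tbasis k a) v = (if last v = a then D (butlast v) else 0)"
proof -
  obtain u c where v: "v = u @ [c]"
    using assms(1) rev_exhaust by blast
  have "tmult k D (tbasis k a) v = (\<Sum>i\<le>Suc (length u). D (take i v) * tbasis k a (drop i v))"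
    using assms v by (simp add: tmult_def)
  also have "\<dots> = (\<Sum>i\<le>Suc (length u). if i = length u then (if c = a then D u else 0) else 0)"
  proof (intro sum.cong refl)
    fix i assume i: "i \<in> {..Suc (length u)}"
    show "D (take i v) * tbasis k a (drop i v) = (if i = length u then (if c = a then D u else 0) else 0)"
    proof (cases "i \<le> length u")
      case True
      then have "drop i v = drop i u @ [c]" "take i v = take i u"
        using v by auto
      then show ?thesis
        using True assms v by (auto simp: tbasis_def)
    next
      case False
      then have "drop i v = []"
        using v i by auto
      then show ?thesis
        using False by (auto simp: tbasis_def)
    qed
  qed
  also have "\<dots> = (if last v = a then D (butlast v) else 0)"
    using v by (subst sum.delta) auto
  finally show ?thesis .
qed

lemma bracketing_Suc_Suc_apply:
  assumes "length v = Suc (Suc n)" "length v \<le> k" "hd v < d" "last v < d"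
  shows "bracketing d k (Suc (Suc n)) p v
    = bracketing d k (Suc n) (lquot (hd v) p) (tl v) - bracketing d k (Suc n) (lquot (last v) p) (butlast v)"
proof -
  have ne: "v \<noteq> []"
    using assms by auto
  have "bracketing d k (Suc (Suc n)) p v = (\<Sum>a<d.
        (if hd v = a then bracketing d k (Suc n) (lquot a p) (tl v) else 0)
      - (if last v = a then bracketing d k (Suc n) (lquot a p) (butlast v) else 0))"
    by (simp add: tbracket_def tmult_tbasis_left[OF ne assms(2)] tmult_tbasis_right[OF ne assms(2)])
  then show ?thesis
    using assms by (simp add: sum_subtractf)
qed

text \<open>The coefficient of the word \<open>v\<close> in \<open>bracketing d k (length v) p\<close>.\<close>

definition bracketing_term :: "tensor \<Rightarrow> nat list \<Rightarrow> nat \<Rightarrow> real" where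
  "bracketing_term p v j = shuffle_coeff (\<lambda>w. p (w @ [v ! j])) (take j v) (rev (drop (Suc j) v))"

definition bracketing_coeff :: "tensor \<Rightarrow> nat list \<Rightarrow> real" where
  "bracketing_coeff p v = (\<Sum>j<length v. (-1) ^ (length v - 1 - j) * bracketing_term p v j)"

lemma bracketing_term_Cons_snoc:
  assumes m: "length m = n" and j: "j < Suc (Suc n)"
  shows "bracketing_term p (x # m @ [z]) j
    = (if j = 0 then 0 else bracketing_term (lquot x p) (m @ [z]) (j - 1))
    + (if j = Suc n then 0 else bracketing_term (lquot z p) (x # m) j)"
proof (cases j)
  case 0
  then show ?thesis
    using m by (simp add: bracketing_term_def lquot_apply)
next
  case (Suc i)
  show ?thesis
  proof (cases "j = Suc n")
    case True
    then show ?thesis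
      using m Suc by (simp add: bracketing_term_def nth_append lquot_apply)
  next
    case False
    then have i: "i < n"
      using j Suc by simp
    have "rev (drop (Suc j) (x # m @ [z])) = z # rev (drop (Suc i) m)"
      and "take j (x # m @ [z]) = x # take i m" and "(x # m @ [z]) ! j = m ! i"
      using i m Suc by (simp_all add: nth_append)
    moreover have "(m @ [z]) ! i = m ! i" "(x # m) ! j = m ! i"
      using i m Suc by (simp_all add: nth_append)
    ultimately show ?thesis
      using i m Suc False
      by (simp add: bracketing_term_def shuffle_coeff_Cons_Cons lquot_def)
  qed
qed

lemma bracketing_coeff_Cons_snoc:
  assumes m: "length m = n"
  shows "bracketing_coeff p (x # m @ [z]) = bracketing_coeff (lquot x p) (m @ [z]) - bracketing_coeff (lquot z p) (x # m)"
proof -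
  define A where "A j = bracketing_term (lquot x p) (m @ [z]) j" for j
  define B where "B j = bracketing_term (lquot z p) (x # m) j" for j
  have "bracketing_coeff p (x # m @ [z]) = (\<Sum>j<Suc (Suc n).
      (-1) ^ (Suc n - j) * ((if j = 0 then 0 else A (j - 1)) + (if j = Suc n then 0 else B j)))"
    unfolding bracketing_coeff_def A_def B_def using m
    by (intro sum.cong) (simp_all add: bracketing_term_Cons_snoc)
  also have "\<dots> = (\<Sum>j<Suc (Suc n). (-1) ^ (Suc n - j) * (if j = 0 then 0 else A (j - 1)))
      + (\<Sum>j<Suc (Suc n). (-1) ^ (Suc n - j) * (if j = Suc n then 0 else B j))"
    by (simp add: distrib_left sum.distrib)
  also have "(\<Sum>j<Suc (Suc n). (-1) ^ (Suc n - j) * (if j = 0 then 0 else A (j - 1)))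
      = (\<Sum>j<Suc n. (-1) ^ (n - j) * A j)"
    by (subst sum.lessThan_Suc_shift) simp
  also have "(\<Sum>j<Suc (Suc n). (-1) ^ (Suc n - j) * (if j = Suc n then 0 else B j))
      = (\<Sum>j<Suc n. (-1) ^ (Suc n - j) * B j)"
    by (subst sum.lessThan_Suc) (simp add: lessThan_Suc_atMost)
  also have "\<dots> = - (\<Sum>j<Suc n. (-1) ^ (n - j) * B j)"
    by (subst sum_negf[symmetric]) (auto intro!: sum.cong simp: Suc_diff_le)
  finally show ?thesis
    using m by (simp add: bracketing_coeff_def A_def B_def)
qed

lemma bracketing_apply:
  assumes "length v = Suc n" "Suc n \<le> k" "set v \<subseteq> {..<d}"
  shows "bracketing d k (Suc n) p v = bracketing_coeff p v"
  using assms
proof (induction n arbitrary: p v)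
  case 0
  then obtain c where v: "v = [c]" and c: "c < d"
    by (cases v) auto
  have "bracketing d k (Suc 0) p v = (\<Sum>a<d. if a = c then p [a] else 0)"
    unfolding bracketing.simps using 0 v by (intro sum.cong) (auto simp: tbasis_def)
  then show ?case
    using v c by (simp add: bracketing_coeff_def bracketing_term_def)
next
  case (Suc n)
  obtain x v' where "v = x # v'" and "v' \<noteq> []"
    using Suc.prems(1) by (cases v) fastforce+
  then obtain m z where v: "v = x # m @ [z]"
    using rev_exhaust by blast
  have m: "length m = n" and xz: "x < d" "z < d"
    using Suc.prems v by auto
  have "bracketing d k (Suc (Suc n)) p v
      = bracketing d k (Suc n) (lquot x p) (m @ [z]) - bracketing d k (Suc n) (lquot z p) (x # m)"
    using bracketing_Suc_Suc_apply[of v n k d p] Suc.prems xz v by simp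
  also have "\<dots> = bracketing_coeff (lquot x p) (m @ [z]) - bracketing_coeff (lquot z p) (x # m)"
    using Suc.prems v m by (simp add: Suc.IH)
  finally show ?case
    using bracketing_coeff_Cons_snoc[OF m] v by simp
qed

text \<open>By \<open>shuffle_coeff_snoc_snoc\<close> the sum is a shuffle coefficient of \<open>p\<close> at two non-empty
  words.\<close>

lemma bracketing_term_primitive_Suc:
  assumes p: "primitive d k p" and j: "Suc j < length v" and v: "length v \<le> k"
  shows "bracketing_term p v j + bracketing_term p v (Suc j) = 0"
proof -
  have "drop (Suc j) v = v ! Suc j # drop (Suc (Suc j)) v"
    using j by (simp add: Cons_nth_drop_Suc)
  then have r: "rev (drop (Suc (Suc j)) v) @ [v ! Suc j] = rev (drop (Suc j) v)"
    by simp
  have t: "take (Suc j) v = take j v @ [v ! j]"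
    using j by (simp add: take_Suc_conv_app_nth)
  have "bracketing_term p v j + bracketing_term p v (Suc j)
      = shuffle_coeff p (take (Suc j) v) (rev (drop (Suc j) v))"
    using shuffle_coeff_snoc_snoc[of p "take j v" "v ! j" "rev (drop (Suc (Suc j)) v)" "v ! Suc j"]
    unfolding r t[symmetric] bracketing_term_def by simp
  also have "\<dots> = 0"
  proof -
    have "take (Suc j) v \<noteq> []" "rev (drop (Suc j) v) \<noteq> []"
      "length (take (Suc j) v) + length (rev (drop (Suc j) v)) \<le> k"
      using j v by auto
    then show ?thesis
      using p by (simp add: primitive_def)
  qed
  finally show ?thesis .
qed

lemma bracketing_coeff_primitive:
  assumes p: "primitive d k p" and v: "1 \<le> length v" "length v \<le> k"
  shows "bracketing_coeff p v = real (length v) * p v"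
proof -
  define n where "n = length v"
  have "bracketing_term p v (n - 1) = p v"
  proof -
    have "take (Suc (n - 1)) v = take (n - 1) v @ [v ! (n - 1)]"
      using v by (intro take_Suc_conv_app_nth) (simp add: n_def)
    then have "take (n - 1) v @ [v ! (n - 1)] = v"
      using v by (simp add: n_def)
    then show ?thesis
      using v by (simp add: bracketing_term_def n_def)
  qed
  then have alt: "bracketing_term p v (n - 1 - i) = (-1) ^ i * p v" if "i < n" for i
    using that
  proof (induction i)
    case (Suc i)
    have "Suc (n - 1 - Suc i) = n - 1 - i"
      using Suc.prems by simp
    then show ?case
      using Suc bracketing_term_primitive_Suc[OF p, of "n - 1 - Suc i"] v
      by (simp add: n_def add_eq_0_iff)
  qed simp
  have "bracketing_coeff p v = (\<Sum>j<n. (-1) ^ (n - 1 - j) * bracketing_term p v j)"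
    by (simp add: bracketing_coeff_def n_def)
  also have "\<dots> = (\<Sum>j<n. p v)"
  proof (intro sum.cong refl)
    fix j assume "j \<in> {..<n}"
    then have "bracketing_term p v j = (-1) ^ (n - 1 - j) * p v"
      using alt[of "n - 1 - j"] by simp
    then show "(-1) ^ (n - 1 - j) * bracketing_term p v j = p v"
      by (simp flip: mult.assoc power_add)
  qed
  finally show ?thesis
    by (simp add: n_def)
qed

lemma primitive_homogeneous_lie_alg:
  assumes p: "primitive d k p" and h: "homogeneous n p" and n: "1 \<le> n" "n \<le> k"
  shows "p \<in> lie_alg d k"
proof -
  have "p w = (1 / real n) * bracketing d k n p w" for w
  proof (cases "length w = n \<and> set w \<subseteq> {..<d}")
    case True
    obtain m where m: "n = Suc m"
      using n by (cases n) auto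
    then have "bracketing d k n p w = real n * p w"
      using True n bracketing_apply[of w m k d p] bracketing_coeff_primitive[OF p] by simp
    then show ?thesis
      using n by simp
  next
    case False
    then have "p w = 0" and "bracketing d k n p w = 0"
      using p h homogeneous_bracketing[of n d k p] T_lie_alg[OF bracketing_lie_alg, of d k n p]
      by (auto simp: homogeneous_def primitive_def T_def)
    then show ?thesis
      by simp
  qed
  then have "p = (\<lambda>w. (1 / real n) * bracketing d k n p w)" ..
  also have "\<dots> \<in> lie_alg d k"
    by (rule lie_alg.smult[OF bracketing_lie_alg])
  finally show ?thesis .
qed

lemma primitive_level:
  assumes "primitive d k p" "1 \<le> n"
  shows "primitive d k (level n p)"
  using assms by (simp add: primitive_def T_level shuffle_coeff_level) (simp add: level_def)

lemma primitive_imp_lie_alg: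
  assumes p: "primitive d k p"
  shows "p \<in> lie_alg d k"
proof -
  have "p w = (\<Sum>n\<in>{1..k}. level n p w)" for w
  proof -
    have "(\<Sum>n\<in>{1..k}. level n p w) = (\<Sum>n\<in>{1..k}. if n = length w then p w else 0)"
      by (intro sum.cong) (auto simp: level_def)
    also have "\<dots> = p w"
      using p by (cases "w = []") (auto simp: primitive_def T_def Suc_le_eq)
    finally show ?thesis ..
  qed
  then have "p = (\<lambda>w. \<Sum>n\<in>{1..k}. level n p w)" ..
  also have "\<dots> \<in> lie_alg d k"
    using p by (intro lie_alg_sum primitive_homogeneous_lie_alg[OF primitive_level homogeneous_level]) auto
  finally show ?thesis .
qed

lemma G_iff_group_like: "y \<in> G d k \<longleftrightarrow> group_like d k y"
proof
  assume "group_like d k y"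
  then obtain a where "primitive d k a" "texp k a = y"
    by (rule group_like_eq_texp)
  then show "y \<in> G d k"
    by (auto simp: G_def intro: primitive_imp_lie_alg)
qed (rule G_group_like)

section \<open>The barycenter via a fixed-point iteration\<close>

definition log_residual :: "nat \<Rightarrow> nat \<Rightarrow> tensor \<Rightarrow> (nat \<Rightarrow> tensor) \<Rightarrow> tensor" where
  "log_residual k N m x = (\<lambda>w. \<Sum>i<N. tlog k (tmult k (tinv_series k m) (x i)) w)"

definition bary_step :: "nat \<Rightarrow> nat \<Rightarrow> tensor \<Rightarrow> (nat \<Rightarrow> tensor) \<Rightarrow> tensor" where
  "bary_step k N m x = tmult k m (texp k (\<lambda>w. (1 / real N) * log_residual k N m x w))"

primrec bary_iter :: "nat \<Rightarrow> nat \<Rightarrow> (nat \<Rightarrow> tensor) \<Rightarrow> nat \<Rightarrow> tensor" where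
  "bary_iter k N x 0 = tone"
| "bary_iter k N x (Suc t) = bary_step k N (bary_iter k N x t) x"

lemma tlog_tmult_near_tone:
  assumes y: "unipotent k y" and e: "vanishes_below n e" "truncated k e" and n: "1 \<le> n"
    and g: "vanishes_below (Suc n) (\<lambda>w. g w - (tone w - e w))"
  shows "vanishes_below (Suc n) (\<lambda>w. tlog k (tmult k g y) w - tlog k y w + e w)"
proof -
  have y1: "vanishes_below 1 (\<lambda>w. y w - tone w)"
    by (rule unipotent_minus_tone[OF y])
  have eq: "tmult k (\<lambda>w. g w - (tone w - e w)) y w - tmult k e (\<lambda>w. y w - tone w) w
      = (tmult k g y w - tone w) - ((y w - tone w) + - e w)" for w
    using y e by (simp add: tmult_diff_left tmult_diff_right tmult_tone_left tmult_tone_right unipotent_def)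
  have "vanishes_below (Suc n) (tmult k e (\<lambda>w. y w - tone w))"
    using vanishes_below_tmult[OF e(1) y1] by simp
  from vanishes_below_diff[OF vanishes_below_tmult_left[OF g, of k y] this]
  have "vanishes_below (Suc n) (\<lambda>w. (tmult k g y w - tone w) - ((y w - tone w) + - e w))"
    by (simp only: eq)
  then have "vanishes_below (Suc n) (\<lambda>w. tlog k (tmult k g y) w - tlog k (\<lambda>v. y v - e v) w)"
    using vanishes_below_tfps_eval_diff by (simp add: tlog_eq_tfps_eval algebra_simps)
  moreover have "vanishes_below (Suc n) (\<lambda>w. tlog k (\<lambda>v. y v - e v) w - tlog k y w + e w)"
    using tfps_eval_perturb[OF y1, of n "\<lambda>w. - e w" k "fps_ln 1"] e n
    by (simp add: tlog_eq_tfps_eval fps_ln_nth vanishes_below_def truncated_def algebra_simps)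
  ultimately have "vanishes_below (Suc n) (\<lambda>w. (tlog k (tmult k g y) w - tlog k (\<lambda>v. y v - e v) w)
      + (tlog k (\<lambda>v. y v - e v) w - tlog k y w + e w))"
    by (rule vanishes_below_add)
  then show ?thesis
    by (simp add: algebra_simps)
qed

lemma log_residual_tmult:
  assumes x: "\<And>i. i < N \<Longrightarrow> unipotent k (x i)" and m: "unipotent k m" and h: "unipotent k h"
    and e: "vanishes_below n (\<lambda>w. h w - tone w)" and n: "1 \<le> n"
  shows "vanishes_below (Suc n)
    (\<lambda>w. log_residual k N (tmult k m h) x w - log_residual k N m x w + real N * (h w - tone w))"
proof -
  define y where "y i = tmult k (tinv_series k m) (x i)" for i
  have y: "unipotent k (y i)" if "i < N" for i
    unfolding y_def by (intro unipotent_tmult unipotent_tinv_series m x that)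
  have "truncated k (\<lambda>w. h w - tone w)"
    using h by (simp add: unipotent_def truncated_diff)
  note near = tlog_tmult_near_tone[OF y e this n tinv_series_near_tone[OF h e n]]
  have "log_residual k N (tmult k m h) x = (\<lambda>w. \<Sum>i<N. tlog k (tmult k (tinv_series k h) (y i)) w)"
    using m h by (simp add: log_residual_def tinv_series_tmult y_def tmult_assoc)
  moreover have "log_residual k N m x = (\<lambda>w. \<Sum>i<N. tlog k (y i) w)"
    by (simp add: log_residual_def y_def)
  ultimately show ?thesis
    using vanishes_below_sum[of "{..<N}", OF near] by (simp add: sum.distrib sum_subtractf)
qed

lemma log_residual_unique:
  assumes x: "\<And>i. i < N \<Longrightarrow> unipotent k (x i)" and N: "1 \<le> N"
    and m: "unipotent k m" "log_residual k N m x = (\<lambda>w. 0)"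
    and m': "unipotent k m'" "log_residual k N m' x = (\<lambda>w. 0)"
  shows "m' = m"
proof -
  define h where "h = tmult k (tinv_series k m) m'"
  have h: "unipotent k h"
    unfolding h_def by (intro unipotent_tmult unipotent_tinv_series m m')
  have mh: "tmult k m h = m'"
    using m m' by (simp add: h_def tmult_assoc[symmetric] tinv_series_inverse tmult_tone_left unipotent_def)
  have "vanishes_below (Suc n) (\<lambda>w. h w - tone w)" for n
  proof (induction n)
    case 0
    then show ?case
      using h by (simp add: vanishes_below_def unipotent_def tone_def)
  next
    case (Suc n)
    then have "vanishes_below (Suc (Suc n)) (\<lambda>w. real N * (h w - tone w))"
      using log_residual_tmult[where x = x and N = N, OF x m(1) h Suc] m(2) m'(2) mh by simp
    then show ?case
      using N by (simp add: vanishes_below_def)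
  qed
  then have "h = tone"
    using h by (intro truncated_vanishes_below_eqI[of k]) (simp_all add: unipotent_def)
  then show ?thesis
    using mh m by (simp add: tmult_tone_right unipotent_def)
qed

lemma primitive_log_residual:
  assumes "group_like d k m" "\<And>i. i < N \<Longrightarrow> group_like d k (x i)"
  shows "primitive d k (log_residual k N m x)"
  unfolding log_residual_def using assms
  by (intro primitive_sum primitive_tlog group_like_tmult group_like_tinv_series) simp_all

lemma group_like_bary_iter:
  assumes x: "\<And>i. i < N \<Longrightarrow> group_like d k (x i)"
  shows "group_like d k (bary_iter k N x t)"
proof (induction t)
  case 0
  show ?case
    by (simp add: group_like_def shuffle_coeff_tone) (simp add: tone_def)
next
  case (Suc t)
  have "primitive d k (log_residual k N (bary_iter k N x t) x)"
    by (rule primitive_log_residual[OF Suc x])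
  then show ?case
    unfolding bary_iter.simps bary_step_def
    by (intro group_like_tmult[OF Suc] group_like_texp primitive_scale)
qed

lemma vanishes_below_log_residual_bary_iter:
  assumes x: "\<And>i. i < N \<Longrightarrow> group_like d k (x i)" and N: "1 \<le> N"
  shows "vanishes_below (Suc t) (log_residual k N (bary_iter k N x t) x)"
proof (induction t)
  case 0
  have "tinv_series k tone = tone"
    using tinv_series_inverse(2)[of k tone] by (simp add: tmult_tone_right tinv_series_def)
  then have "tlog k (tmult k (tinv_series k tone) (x i)) [] = 0" if "i < N" for i
    using group_like_unipotent[OF x[OF that]] by (simp add: tmult_tone_left unipotent_def tlog_Nil)
  then show ?case
    by (simp add: log_residual_def vanishes_below_def)
next
  case (Suc t)
  define m where "m = bary_iter k N x t"
  define c where "c = (\<lambda>w. (1 / real N) * log_residual k N m x w)"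
  have m: "group_like d k m"
    unfolding m_def using x by (rule group_like_bary_iter)
  have c: "vanishes_below (Suc t) c" "primitive d k c"
    unfolding c_def
    by (rule vanishes_below_scale[OF Suc[folded m_def]], rule primitive_scale[OF primitive_log_residual[OF m x]])
  have first: "vanishes_below (Suc (Suc t)) (\<lambda>w. texp k c w - tone w - c w)"
    using tfps_eval_first_order[OF c(1) primitive_truncated[OF c(2)], of "fps_exp 1"]
    by (simp add: texp_eq_tfps_eval)
  then have "vanishes_below (Suc t) (\<lambda>w. texp k c w - tone w)"
    using vanishes_below_add[OF vanishes_below_mono[OF first, of "Suc t"] c(1)] by simp
  from log_residual_tmult[OF group_like_unipotent[OF x] group_like_unipotent[OF m]
      group_like_unipotent[OF group_like_texp[OF c(2)]] this]
  have "vanishes_below (Suc (Suc t)) (\<lambda>w. log_residual k N (tmult k m (texp k c)) x w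
      - log_residual k N m x w + real N * (texp k c w - tone w))"
    by simp
  from vanishes_below_diff[OF this vanishes_below_scale[OF first, of "real N"]]
  show ?case
    using N by (simp add: m_def c_def bary_step_def algebra_simps)
qed

lemma bary_eq_bary_iter:
  assumes x: "\<And>i. i < N \<Longrightarrow> x i \<in> G d k" and N: "1 \<le> N"
  shows "bary d k N x = bary_iter k N x k"
proof -
  have x': "group_like d k (x i)" if "i < N" for i
    using x[OF that] by (simp add: G_iff_group_like)
  have residual: "(\<lambda>w. \<Sum>i<N. tlog k (tmult k (tinv d k m) (x i)) w) = log_residual k N m x"
    if "group_like d k m" for m
    using that by (simp add: log_residual_def tinv_eq_tinv_series group_like_def)
  define b where "b = bary_iter k N x k"
  have b: "group_like d k b"
    unfolding b_def using x' by (rule group_like_bary_iter)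
  have res: "log_residual k N b x = (\<lambda>w. 0)"
    unfolding b_def using x' N
    by (intro truncated_vanishes_below_eq_zero[of k] vanishes_below_log_residual_bary_iter)
      (auto simp: log_residual_def tlog_eq_tfps_eval intro!: truncated_sum)
  show ?thesis
    unfolding bary_def b_def[symmetric]
  proof (rule the_equality)
    show "b \<in> G d k \<and> (\<lambda>w. \<Sum>i<N. tlog k (tmult k (tinv d k b) (x i)) w) = (\<lambda>w. 0)"
      using b res residual by (simp add: G_iff_group_like)
    fix m assume "m \<in> G d k \<and> (\<lambda>w. \<Sum>i<N. tlog k (tmult k (tinv d k m) (x i)) w) = (\<lambda>w. 0)"
    then have "group_like d k m" "log_residual k N m x = (\<lambda>w. 0)"
      using residual by (auto simp: G_iff_group_like)
    then show "m = b"
      using log_residual_unique[OF group_like_unipotent[OF x'] N group_like_unipotent[OF b] res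
          group_like_unipotent] by blast
  qed
qed

section \<open>The iteration is polynomial\<close>

text \<open>Polynomials are handled as lists of monomials with coefficients, which makes products
  easy; \<open>ncpoly_of_list\<close> converts to coefficient functions at the end.\<close>

type_synonym poly_list = "((nat \<times> nat) list \<times> real) list"

definition list_poly_eval :: "nat \<Rightarrow> poly_list \<Rightarrow> (nat \<Rightarrow> tensor) \<Rightarrow> tensor" where
  "list_poly_eval k P x = (\<lambda>u. \<Sum>p\<leftarrow>P. snd p * monoeval k (fst p) x u)"

definition list_poly_mult :: "poly_list \<Rightarrow> poly_list \<Rightarrow> poly_list" where
  "list_poly_mult P Q = concat (map (\<lambda>p. map (\<lambda>q. (fst p @ fst q, snd p * snd q)) Q) P)"

definition poly_map :: "nat \<Rightarrow> nat \<Rightarrow> ((nat \<Rightarrow> tensor) \<Rightarrow> tensor) \<Rightarrow> bool" where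
  "poly_map N k F \<longleftrightarrow> (\<exists>P. (\<forall>p\<in>set P. set (fst p) \<subseteq> {..<N} \<times> {1..k}) \<and>
     (\<forall>x. (\<forall>i<N. unipotent k (x i)) \<longrightarrow> F x = list_poly_eval k P x))"

lemma monoeval_Nil [simp]: "monoeval k [] z = tone"
  by (simp add: monoeval_def)

lemma monoeval_Cons [simp]: "monoeval k ((i, j) # w) z = tmult k (level j (z i)) (monoeval k w z)"
  by (simp add: monoeval_def)

lemma truncated_monoeval: "truncated k (monoeval k w z)"
  by (cases w) auto

lemma monoeval_append: "monoeval k (u @ v) z = tmult k (monoeval k u z) (monoeval k v z)"
proof (induction u)
  case Nil
  then show ?case
    by (simp add: tmult_tone_left truncated_monoeval)
next
  case (Cons p u)
  then show ?case
    by (cases p) (simp add: tmult_assoc)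
qed

lemma list_poly_eval_Cons:
  "list_poly_eval k (p # P) x = (\<lambda>u. snd p * monoeval k (fst p) x u + list_poly_eval k P x u)"
  by (simp add: list_poly_eval_def)

lemma list_poly_eval_append:
  "list_poly_eval k (P @ Q) x = (\<lambda>u. list_poly_eval k P x u + list_poly_eval k Q x u)"
  by (simp add: list_poly_eval_def)

lemma list_poly_eval_scale:
  "list_poly_eval k (map (\<lambda>p. (fst p, c * snd p)) P) x = (\<lambda>u. c * list_poly_eval k P x u)"
  unfolding list_poly_eval_def by (rule ext) (simp add: o_def sum_list_const_mult mult.assoc)

lemma tmult_list_poly_eval:
  "tmult k (list_poly_eval k P x) (list_poly_eval k Q x) = list_poly_eval k (list_poly_mult P Q) x"
proof (induction P)
  case Nil
  then show ?case
    by (simp add: list_poly_mult_def list_poly_eval_def)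
next
  case (Cons p P)
  have mono: "tmult k (monoeval k w x) (list_poly_eval k Q x)
      = list_poly_eval k (map (\<lambda>q. (w @ fst q, snd q)) Q) x" for w
    by (induction Q) (simp_all add: list_poly_eval_def tmult_add_right tmult_scale_right monoeval_append)
  have "tmult k (list_poly_eval k (p # P) x) (list_poly_eval k Q x) = (\<lambda>u.
      snd p * tmult k (monoeval k (fst p) x) (list_poly_eval k Q x) u + list_poly_eval k (list_poly_mult P Q) x u)"
    by (simp add: list_poly_eval_Cons tmult_add_left tmult_scale_left Cons)
  also have "\<dots> = list_poly_eval k (list_poly_mult (p # P) Q) x"
    using list_poly_eval_scale[of k "snd p" "map (\<lambda>q. (fst p @ fst q, snd q)) Q" x]
    by (simp add: mono list_poly_mult_def list_poly_eval_append o_def)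
  finally show ?case .
qed

lemma poly_map_add: "poly_map N k F \<Longrightarrow> poly_map N k F' \<Longrightarrow> poly_map N k (\<lambda>x u. F x u + F' x u)"
  unfolding poly_map_def
proof (elim exE conjE)
  fix P Q
  assume "\<forall>p\<in>set P. set (fst p) \<subseteq> {..<N} \<times> {1..k}" "\<forall>p\<in>set Q. set (fst p) \<subseteq> {..<N} \<times> {1..k}"
    and "\<forall>x. (\<forall>i<N. unipotent k (x i)) \<longrightarrow> F x = list_poly_eval k P x"
    and "\<forall>x. (\<forall>i<N. unipotent k (x i)) \<longrightarrow> F' x = list_poly_eval k Q x"
  then show "\<exists>R. (\<forall>p\<in>set R. set (fst p) \<subseteq> {..<N} \<times> {1..k}) \<and>
      (\<forall>x. (\<forall>i<N. unipotent k (x i)) \<longrightarrow> (\<lambda>u. F x u + F' x u) = list_poly_eval k R x)"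
    by (intro exI[of _ "P @ Q"]) (auto simp: list_poly_eval_append)
qed

lemma poly_map_scale: "poly_map N k F \<Longrightarrow> poly_map N k (\<lambda>x u. c * F x u)"
  unfolding poly_map_def
proof (elim exE conjE)
  fix P
  assume "\<forall>p\<in>set P. set (fst p) \<subseteq> {..<N} \<times> {1..k}"
    and "\<forall>x. (\<forall>i<N. unipotent k (x i)) \<longrightarrow> F x = list_poly_eval k P x"
  then show "\<exists>R. (\<forall>p\<in>set R. set (fst p) \<subseteq> {..<N} \<times> {1..k}) \<and>
      (\<forall>x. (\<forall>i<N. unipotent k (x i)) \<longrightarrow> (\<lambda>u. c * F x u) = list_poly_eval k R x)"
    by (intro exI[of _ "map (\<lambda>p. (fst p, c * snd p)) P"]) (auto simp: list_poly_eval_scale)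
qed

lemma poly_map_diff: "poly_map N k F \<Longrightarrow> poly_map N k F' \<Longrightarrow> poly_map N k (\<lambda>x u. F x u - F' x u)"
  using poly_map_add[of N k F "\<lambda>x u. (-1) * F' x u"] poly_map_scale[of N k F' "-1"] by simp

lemma poly_map_zero: "poly_map N k (\<lambda>x u. 0)"
  unfolding poly_map_def by (rule exI[of _ "[]"]) (simp add: list_poly_eval_def)

lemma poly_map_sum: "(\<And>a. a \<in> A \<Longrightarrow> poly_map N k (F a)) \<Longrightarrow> poly_map N k (\<lambda>x u. \<Sum>a\<in>A. F a x u)"
  by (induction A rule: infinite_finite_induct) (simp_all add: poly_map_zero poly_map_add)

lemma poly_map_tmult: "poly_map N k F \<Longrightarrow> poly_map N k F' \<Longrightarrow> poly_map N k (\<lambda>x. tmult k (F x) (F' x))"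
  unfolding poly_map_def
proof (elim exE conjE)
  fix P Q
  assume "\<forall>p\<in>set P. set (fst p) \<subseteq> {..<N} \<times> {1..k}" "\<forall>p\<in>set Q. set (fst p) \<subseteq> {..<N} \<times> {1..k}"
    and "\<forall>x. (\<forall>i<N. unipotent k (x i)) \<longrightarrow> F x = list_poly_eval k P x"
    and "\<forall>x. (\<forall>i<N. unipotent k (x i)) \<longrightarrow> F' x = list_poly_eval k Q x"
  then show "\<exists>R. (\<forall>p\<in>set R. set (fst p) \<subseteq> {..<N} \<times> {1..k}) \<and>
      (\<forall>x. (\<forall>i<N. unipotent k (x i)) \<longrightarrow> tmult k (F x) (F' x) = list_poly_eval k R x)"
    by (intro exI[of _ "list_poly_mult P Q"]) (auto simp: list_poly_mult_def tmult_list_poly_eval)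
qed

lemma poly_map_tone: "poly_map N k (\<lambda>x. tone)"
  unfolding poly_map_def by (rule exI[of _ "[([], 1)]"]) (simp add: list_poly_eval_def)

text \<open>A variable \<open>x\<^sub>i\<close> is the sum of its levels, and level \<open>0\<close> of a unipotent element is \<open>1\<close>.\<close>

lemma poly_map_var:
  assumes i: "i < N"
  shows "poly_map N k (\<lambda>x. x i)"
proof -
  define P where "P = ([], 1 :: real) # map (\<lambda>j. ([(i, j)], 1)) [1..<Suc k]"
  have "x i = list_poly_eval k P x" if "unipotent k (x i)" for x
  proof
    fix u
    have "truncated k (level j (x i))" for j
      using that by (simp add: unipotent_def truncated_def level_def)
    then have "list_poly_eval k P x u = tone u + (\<Sum>j\<in>{1..<Suc k}. level j (x i) u)"
      by (simp add: P_def list_poly_eval_def o_def tmult_tone_right interv_sum_list_conv_sum_set_nat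
          del: upt_Suc)
    also have "\<dots> = tone u + (\<Sum>j\<in>{1..<Suc k}. if j = length u then x i u else 0)"
      by (intro arg_cong2[where f = "(+)"] sum.cong) (auto simp: level_def)
    also have "\<dots> = x i u"
      using that by (cases "u = []") (auto simp: tone_def unipotent_def truncated_def Suc_le_eq)
    finally show "x i u = list_poly_eval k P x u" ..
  qed
  then show ?thesis
    unfolding poly_map_def using i by (intro exI[of _ P]) (auto simp: P_def)
qed

lemma poly_map_tpow: "poly_map N k F \<Longrightarrow> poly_map N k (\<lambda>x. tpow k (F x) l)"
  by (induction l) (simp_all add: poly_map_tone tpow_Suc poly_map_tmult)

lemma poly_map_tfps_eval: "poly_map N k F \<Longrightarrow> poly_map N k (\<lambda>x. tfps_eval k (F x) f)"
  unfolding tfps_eval_def by (intro poly_map_sum poly_map_scale poly_map_tpow)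

lemma poly_map_bary_iter: "poly_map N k (\<lambda>x. bary_iter k N x t)"
proof (induction t)
  case 0
  then show ?case
    by (simp add: poly_map_tone)
next
  case (Suc t)
  have "poly_map N k (\<lambda>x. log_residual k N (bary_iter k N x t) x)"
    unfolding log_residual_def tlog_eq_tfps_eval tinv_series_def
    by (intro poly_map_sum poly_map_tfps_eval poly_map_diff poly_map_tmult poly_map_tone poly_map_var Suc)
      simp
  then show ?case
    unfolding bary_iter.simps bary_step_def texp_eq_tfps_eval
    by (intro poly_map_tmult Suc poly_map_tfps_eval poly_map_scale)
qed

lemma sum_grouped_sum_list:
  fixes f :: "'a \<Rightarrow> real"
  assumes "finite W" "fst ` set L \<subseteq> W"
  shows "(\<Sum>w\<in>W. (\<Sum>p\<leftarrow>filter (\<lambda>p. fst p = w) L. snd p) * f w) = (\<Sum>p\<leftarrow>L. snd p * f (fst p))"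
  using assms(2)
proof (induction L)
  case (Cons p L)
  have "(\<Sum>p\<leftarrow>filter (\<lambda>p. fst p = w) (p # L). snd p) * f w
      = (if fst p = w then snd p * f w else 0) + (\<Sum>p\<leftarrow>filter (\<lambda>p. fst p = w) L. snd p) * f w" for w
    by (simp add: algebra_simps)
  then have "(\<Sum>w\<in>W. (\<Sum>p\<leftarrow>filter (\<lambda>p. fst p = w) (p # L). snd p) * f w)
      = (\<Sum>w\<in>W. if fst p = w then snd p * f w else 0) + (\<Sum>w\<in>W. (\<Sum>p\<leftarrow>filter (\<lambda>p. fst p = w) L. snd p) * f w)"
    by (simp add: sum.distrib)
  then show ?case
    using Cons assms(1) by simp
qed simp

lemma ncpoly_of_list:
  assumes P: "\<forall>p\<in>set P. set (fst p) \<subseteq> {..<N} \<times> {1..k}"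
  obtains q where "ncpoly N k q" and "\<And>x. ncEval k q x = list_poly_eval k P x"
proof -
  define q where "q w = (\<Sum>p\<leftarrow>filter (\<lambda>p. fst p = w) P. snd p)" for w
  define W where "W = fst ` set P"
  have supp: "{w. q w \<noteq> 0} \<subseteq> W"
  proof
    fix w assume "w \<in> {w. q w \<noteq> 0}"
    then have "filter (\<lambda>p. fst p = w) P \<noteq> []"
      by (auto simp: q_def)
    then show "w \<in> W"
      unfolding W_def filter_empty_conv by force
  qed
  have "ncpoly N k q"
    unfolding ncpoly_def using supp P by (auto simp: W_def intro: finite_subset)
  moreover have "ncEval k q x u = list_poly_eval k P x u" for x u
  proof -
    have "ncEval k q x u = (\<Sum>w\<in>W. q w * monoeval k w x u)"
      unfolding ncEval_def using supp by (intro sum.mono_neutral_left) (auto simp: W_def)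
    also have "\<dots> = list_poly_eval k P x u"
      unfolding q_def list_poly_eval_def by (rule sum_grouped_sum_list) (simp_all add: W_def)
    finally show ?thesis .
  qed
  ultimately show thesis
    using that by blast
qed

theorem proposition4p9:
  fixes d k N :: nat
  assumes "1 \<le> N"
  shows "\<exists>q. ncpoly N k q \<and>
           (\<forall>x. (\<forall>i<N. x i \<in> G d k) \<longrightarrow> bary d k N x = ncEval k q x)"
proof -
  obtain P where P: "\<forall>p\<in>set P. set (fst p) \<subseteq> {..<N} \<times> {1..k}"
    and iter: "\<And>x. (\<forall>i<N. unipotent k (x i)) \<Longrightarrow> bary_iter k N x k = list_poly_eval k P x"
    using poly_map_bary_iter[of N k k] unfolding poly_map_def by blast
  obtain q where q: "ncpoly N k q" "\<And>x. ncEval k q x = list_poly_eval k P x"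
    using ncpoly_of_list[OF P] by blast
  have "bary d k N x = ncEval k q x" if x: "\<forall>i<N. x i \<in> G d k" for x
  proof -
    have "\<forall>i<N. unipotent k (x i)"
      using x by (auto simp: G_iff_group_like intro: group_like_unipotent)
    then show ?thesis
      using bary_eq_bary_iter[of N x d k] x assms iter q(2) by simp
  qed
  with q(1) show ?thesis
    by blast
qed

end
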